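(* Let $\lambda$ be a partition. For each $\mu\in\mathcal{D}(\lambda)$, \[ \sum_{\nu\in\mathcal{U}(\lambda)}\mathcal{P}_\lambda(\mu\rightarrow\nu)=1, \] and for each $\nu\in\mathcal{U}(\lambda)$, \[ \sum_{\mu\in\mathcal{D}^*(\lambda)}\overline{\mathcal{P}}_\lambda(\mu\leftarrow\nu)=1. \]
   Context: Partitions are Young diagrams in French convention (cells $(x,y)\in\mathbb{Z}_{>0}^2$, $x\le\lambda_y$), $\lambda'$ the conjugate. For $c=(x,y)\in\lambda$: $a_\lambda(c)=\lambda_y-x$, $\ell_\lambda(c)=\lambda'_x-y$; $n(\kappa)=\sum_{c\in\kappa}\ell_\kappa(c)$, $n'(\kappa)=\sum_{c\in\kappa}a_\kappa(c)$, and for $\kappa\subseteq\rho$, $n(\rho/\kappa)=n(\rho)-n(\kappa)$, $n'(\rho/\kappa)=n'(\rho)-n'(\kappa)$. $\mathcal{U}(\lambda)$ (resp. $\mathcal{D}(\lambda)$) is the set of partitions obtained by adding (resp. removing) one cell; $\mathcal{D}^*(\lambda)=\mathcal{D}(\lambda)\cup\{\lambda\}$. For $\kappa\subseteq\rho$, $\mathcal{R}_{\rho/\kappa}$ (resp. $\mathcal{C}_{\rho/\kappa}$) is the set of cells of $\kappa$ in a row (resp. column) containing a cell of $\rho/\kappa$. With $[i,j]=1-q^it^j$, for $\kappa$ obtained from $\rho$ by removing one cell: $\alpha_{\rho/\kappa}=\prod_{c\in\mathcal{R}_{\rho/\kappa}}\frac{[a_\kappa(c),\ell_\kappa(c)+1]}{[a_\rho(c),\ell_\rho(c)+1]}\prod_{c\in\mathcal{C}_{\rho/\kappa}}\frac{[a_\kappa(c)+1,\ell_\kappa(c)]}{[a_\rho(c)+1,\ell_\rho(c)]}$,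 $\overline{\alpha}_{\rho/\kappa}=\prod_{c\in\mathcal{R}_{\rho/\kappa}}\frac{[a_\kappa(c)+1,\ell_\kappa(c)]}{[a_\rho(c)+1,\ell_\rho(c)]}\prod_{c\in\mathcal{C}_{\rho/\kappa}}\frac{[a_\kappa(c),\ell_\kappa(c)+1]}{[a_\rho(c),\ell_\rho(c)+1]}$, $\beta_{\rho/\kappa}=1/\alpha_{\rho/\kappa}$, $\overline{\beta}_{\rho/\kappa}=1/\overline{\alpha}_{\rho/\kappa}$. For $\mu\in\mathcal{D}(\lambda)$, $\nu\in\mathcal{U}(\lambda)$ put $A=n'(\lambda/\mu)-n'(\nu/\lambda)$, $B=n(\nu/\lambda)-n(\lambda/\mu)$, $\gamma_{\nu/\lambda/\mu}=\frac{(1-q^At^B)(1-q^{A+1}t^{B-1})}{(1-q)(1-t)}$, and $\mathcal{P}_\lambda(\mu\rightarrow\nu)=t^{B-1}\frac{\alpha_{\nu/\lambda}\beta_{\lambda/\mu}}{\gamma_{\nu/\lambda/\mu}}$, $\overline{\mathcal{P}}_\lambda(\mu\leftarrow\nu)=t^{B-1}\frac{\overline{\alpha}_{\nu/\lambda}\overline{\beta}_{\lambda/\mu}}{\gamma_{\nu/\lambda/\mu}}$. Also $\overline{\mathcal{P}}_\lambda(\lambda\leftarrow\nu)=t^{n(\nu/\lambda)}\overline{\alpha}_{\nu/\lambda}$. *)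

theory Defs
  imports Complex_Main
begin

text \<open>Partitions are represented as weakly decreasing lists of positive naturals;
  row y (counted from 1) has length la ! (y-1). Cells are pairs (x,y), French convention.\<close>

definition is_partition :: "nat list \<Rightarrow> bool" where
  "is_partition la \<longleftrightarrow> sorted_wrt (\<ge>) la \<and> 0 \<notin> set la"

definition part :: "nat list \<Rightarrow> nat \<Rightarrow> nat" where
  "part la y = (if 1 \<le> y \<and> y \<le> length la then la ! (y - 1) else 0)"

definition cells :: "nat list \<Rightarrow> (nat \<times> nat) set" where
  "cells la = {(x, y). 1 \<le> x \<and> 1 \<le> y \<and> x \<le> part la y}"

definition conj :: "nat list \<Rightarrow> nat \<Rightarrow> nat" where
  "conj la x = card {y. 1 \<le> y \<and> x \<le> part la y}"

definition arm :: "nat list \<Rightarrow> nat \<times> nat \<Rightarrow> int" where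
  "arm la c = int (part la (snd c)) - int (fst c)"

definition leg :: "nat list \<Rightarrow> nat \<times> nat \<Rightarrow> int" where
  "leg la c = int (conj la (fst c)) - int (snd c)"

definition nfun :: "nat list \<Rightarrow> int" where
  "nfun la = (\<Sum>c\<in>cells la. leg la c)"

definition nfun' :: "nat list \<Rightarrow> int" where
  "nfun' la = (\<Sum>c\<in>cells la. arm la c)"

definition Ups :: "nat list \<Rightarrow> nat list set" where
  "Ups la = {nu. is_partition nu \<and> cells la \<subseteq> cells nu \<and> card (cells nu - cells la) = 1}"

definition Downs :: "nat list \<Rightarrow> nat list set" where
  "Downs la = {mu. is_partition mu \<and> cells mu \<subseteq> cells la \<and> card (cells la - cells mu) = 1}"

definition Downs_star :: "nat list \<Rightarrow> nat list set" where
  "Downs_star la = insert la (Downs la)"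

definition Rset :: "nat list \<Rightarrow> nat list \<Rightarrow> (nat \<times> nat) set" where
  "Rset rho ka = {c \<in> cells ka. \<exists>d \<in> cells rho - cells ka. snd d = snd c}"

definition Cset :: "nat list \<Rightarrow> nat list \<Rightarrow> (nat \<times> nat) set" where
  "Cset rho ka = {c \<in> cells ka. \<exists>d \<in> cells rho - cells ka. fst d = fst c}"

definition br :: "real \<Rightarrow> real \<Rightarrow> int \<Rightarrow> int \<Rightarrow> real" where
  "br q t i j = 1 - q powi i * t powi j"

definition alpha :: "real \<Rightarrow> real \<Rightarrow> nat list \<Rightarrow> nat list \<Rightarrow> real" where
  "alpha q t rho ka =
     (\<Prod>c\<in>Rset rho ka. br q t (arm ka c) (leg ka c + 1) / br q t (arm rho c) (leg rho c + 1)) *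
     (\<Prod>c\<in>Cset rho ka. br q t (arm ka c + 1) (leg ka c) / br q t (arm rho c + 1) (leg rho c))"

definition alphabar :: "real \<Rightarrow> real \<Rightarrow> nat list \<Rightarrow> nat list \<Rightarrow> real" where
  "alphabar q t rho ka =
     (\<Prod>c\<in>Rset rho ka. br q t (arm ka c + 1) (leg ka c) / br q t (arm rho c + 1) (leg rho c)) *
     (\<Prod>c\<in>Cset rho ka. br q t (arm ka c) (leg ka c + 1) / br q t (arm rho c) (leg rho c + 1))"

definition beta :: "real \<Rightarrow> real \<Rightarrow> nat list \<Rightarrow> nat list \<Rightarrow> real" where
  "beta q t rho ka = 1 / alpha q t rho ka"

definition betabar :: "real \<Rightarrow> real \<Rightarrow> nat list \<Rightarrow> nat list \<Rightarrow> real" where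
  "betabar q t rho ka = 1 / alphabar q t rho ka"

definition Aexp :: "nat list \<Rightarrow> nat list \<Rightarrow> nat list \<Rightarrow> int" where
  "Aexp la mu nu = (nfun' la - nfun' mu) - (nfun' nu - nfun' la)"

definition Bexp :: "nat list \<Rightarrow> nat list \<Rightarrow> nat list \<Rightarrow> int" where
  "Bexp la mu nu = (nfun nu - nfun la) - (nfun la - nfun mu)"

definition gam :: "real \<Rightarrow> real \<Rightarrow> nat list \<Rightarrow> nat list \<Rightarrow> nat list \<Rightarrow> real" where
  "gam q t la mu nu =
     (let A = Aexp la mu nu; B = Bexp la mu nu in
      (1 - q powi A * t powi B) * (1 - q powi (A + 1) * t powi (B - 1)) / ((1 - q) * (1 - t)))"

definition Pdown :: "real \<Rightarrow> real \<Rightarrow> nat list \<Rightarrow> nat list \<Rightarrow> nat list \<Rightarrow> real" where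
  "Pdown q t la mu nu =
     t powi (Bexp la mu nu - 1) * (alpha q t nu la * beta q t la mu) / gam q t la mu nu"

definition Pbar :: "real \<Rightarrow> real \<Rightarrow> nat list \<Rightarrow> nat list \<Rightarrow> nat list \<Rightarrow> real" where
  "Pbar q t la mu nu =
     (if mu = la then t powi (nfun nu - nfun la) * alphabar q t nu la
      else t powi (Bexp la mu nu - 1) * (alphabar q t nu la * betabar q t la mu) / gam q t la mu nu)"

end

theory Submission
  imports "HOL-Computational_Algebra.Polynomial" Defs
begin

text \<open>Put U_r = q^(lambda_r) t^(-r) for r = 1, ..., N + 1, where N is the length of lambda.
  The hook products defining alpha and alphabar for a single added cell telescope row by row,
  so these coefficients, and gamma, are rational functions of the U_r.
  Fix mu, obtained by removing a cell from row z, and put w = U_z / q. Then P(mu -> nu), with nu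
  obtained by adding a cell to row y, has the form C * p(U_y) / ((w - U_y) prod_(r <> y) (U_r - U_y))
  for a constant C and a polynomial p of degree N, and p(U_y) = 0 when row y is not addable because
  then U_(y-1) = t U_y. So the sum over nu is C times a divided difference of p over the N + 2 nodes
  U_1, ..., U_(N+1), w, minus the contribution of the node w; the divided difference vanishes and
  the contribution of w is -1. The second identity is proved in the same way with the nodes
  U_1, ..., U_N, 0 and q U_y; the node 0 accounts for the term with mu = lambda.\<close>

section \<open>Divided differences and a telescoping product\<close>

lemma degree_prod_linear_le: "degree (\<Prod>r\<in>A. [:c r, d:]) \<le> card A"
proof (cases "finite A")
  case True
  have "degree (\<Prod>r\<in>A. [:c r, d:]) \<le> (\<Sum>r\<in>A. degree [:c r, d:])"
    using degree_prod_sum_le[OF True, of "\<lambda>r. [:c r, d:]"] by (simp add: o_def)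
  also have "\<dots> \<le> (\<Sum>r\<in>A. 1)" by (rule sum_mono) simp
  finally show ?thesis by simp
qed simp

lemma lagrange_interpolation:
  fixes S :: "'a::field set" and p :: "'a poly"
  assumes fin: "finite S" and deg: "degree p < card S"
  shows "p = (\<Sum>v\<in>S. smult (poly p v / (\<Prod>v'\<in>S-{v}. (v' - v))) (\<Prod>v'\<in>S-{v}. [:v', -1:]))"
proof (rule poly_eqI_degree[of S])
  fix u assume u: "u \<in> S"
  have "poly (\<Sum>v\<in>S. smult (poly p v / (\<Prod>v'\<in>S-{v}. (v' - v))) (\<Prod>v'\<in>S-{v}. [:v', -1:])) u
      = (\<Sum>v\<in>S. poly p v / (\<Prod>v'\<in>S-{v}. (v' - v)) * (\<Prod>v'\<in>S-{v}. (v' - u)))"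
    by (simp add: poly_sum poly_prod)
  also have "\<dots> = poly p u / (\<Prod>v'\<in>S-{u}. (v' - u)) * (\<Prod>v'\<in>S-{u}. (v' - u))"
    using fin u by (subst sum.remove[of _ u]) (auto intro!: sum.neutral prod_zero)
  also have "\<dots> = poly p u"
  proof -
    have "(\<Prod>v'\<in>S-{u}. (v' - u)) \<noteq> 0" using fin by (subst prod_zero_iff) auto
    then show ?thesis by simp
  qed
  finally show "poly p u = poly (\<Sum>v\<in>S. smult (poly p v / (\<Prod>v'\<in>S-{v}. (v' - v))) (\<Prod>v'\<in>S-{v}. [:v', -1:])) u" ..
next
  have "degree (\<Prod>v'\<in>S-{v}. [:v', -1::'a:]) < card S" if "v \<in> S" for v
    using degree_prod_linear_le[of "\<lambda>v'. v'" "-1" "S - {v}"] fin that deg by simp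
  then show "degree (\<Sum>v\<in>S. smult (poly p v / (\<Prod>v'\<in>S-{v}. (v' - v))) (\<Prod>v'\<in>S-{v}. [:v', -1:])) < card S"
    using deg by (intro degree_sum_less) (auto intro: le_less_trans[OF degree_smult_le])
qed (use deg in auto)

lemma divided_difference_poly_eq_0:
  fixes S :: "'a::field set" and p :: "'a poly"
  assumes fin: "finite S" and deg: "degree p + 1 < card S"
  shows "(\<Sum>v\<in>S. poly p v / (\<Prod>v'\<in>S-{v}. (v' - v))) = 0"
proof -
  define n where "n = card S"
  have coeff_basis: "coeff (\<Prod>v'\<in>S-{v}. [:v', -1:]) (n - 1) = (-1::'a) ^ (n - 1)" if "v \<in> S" for v
  proof -
    have "degree (\<Prod>v'\<in>S-{v}. [:v', -1::'a:]) = n - 1"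
      using that fin n_def by (subst degree_prod_eq_sum_degree) auto
    moreover have "lead_coeff (\<Prod>v'\<in>S-{v}. [:v', -1::'a:]) = (-1) ^ (n - 1)"
      using that fin n_def by (simp add: lead_coeff_prod)
    ultimately show ?thesis by simp
  qed
  have "0 = coeff p (n - 1)" using deg n_def by (simp add: coeff_eq_0)
  also have "\<dots> = coeff (\<Sum>v\<in>S. smult (poly p v / (\<Prod>v'\<in>S-{v}. (v' - v))) (\<Prod>v'\<in>S-{v}. [:v', -1:])) (n - 1)"
    using arg_cong[OF lagrange_interpolation[OF fin], where f = "\<lambda>r. coeff r (n - 1)"] deg by simp
  also have "\<dots> = (-1) ^ (n - 1) * (\<Sum>v\<in>S. poly p v / (\<Prod>v'\<in>S-{v}. (v' - v)))"
    unfolding coeff_sum coeff_smult sum_distrib_left using coeff_basis by (auto intro: sum.cong)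
  finally show ?thesis by simp
qed

lemma divided_difference_poly_eq_0_extra_nodes:
  fixes g :: "'b \<Rightarrow> 'a::field" and p :: "'a poly"
  assumes I: "finite I" and X: "finite X" and inj: "inj_on g I" and disj: "X \<inter> g ` I = {}"
    and deg: "degree p + 1 < card I + card X"
  shows "(\<Sum>i\<in>I. poly p (g i) / ((\<Prod>x\<in>X. (x - g i)) * (\<Prod>j\<in>I-{i}. (g j - g i))))
       + (\<Sum>x\<in>X. poly p x / ((\<Prod>x'\<in>X-{x}. (x' - x)) * (\<Prod>j\<in>I. (g j - x)))) = 0"
proof -
  define S where "S = g ` I \<union> X"
  have "card S = card I + card X"
    unfolding S_def using disj I X by (subst card_Un_disjoint) (auto simp: card_image[OF inj])
  then have "(\<Sum>v\<in>S. poly p v / (\<Prod>v'\<in>S-{v}. (v' - v))) = 0"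
    using I X deg unfolding S_def by (intro divided_difference_poly_eq_0) auto
  moreover have "(\<Sum>v\<in>S. poly p v / (\<Prod>v'\<in>S-{v}. (v' - v))) =
      (\<Sum>v\<in>g ` I. poly p v / (\<Prod>v'\<in>S-{v}. (v' - v))) + (\<Sum>v\<in>X. poly p v / (\<Prod>v'\<in>S-{v}. (v' - v)))"
    unfolding S_def by (rule sum.union_disjoint) (use I X disj in auto)
  moreover have "(\<Sum>v\<in>g ` I. poly p v / (\<Prod>v'\<in>S-{v}. (v' - v))) =
      (\<Sum>i\<in>I. poly p (g i) / ((\<Prod>x\<in>X. (x - g i)) * (\<Prod>j\<in>I-{i}. (g j - g i))))"
  proof (subst sum.reindex[OF inj], rule sum.cong)
    fix i assume i: "i \<in> I"
    have "S - {g i} = g ` (I - {i}) \<union> X" unfolding S_def using i inj disj by (auto simp: inj_on_def)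
    then have "(\<Prod>v'\<in>S-{g i}. (v' - g i)) = (\<Prod>v'\<in>g ` (I - {i}). (v' - g i)) * (\<Prod>x\<in>X. (x - g i))"
      by (simp only:) (rule prod.union_disjoint, use I X disj in auto)
    also have "(\<Prod>v'\<in>g ` (I - {i}). (v' - g i)) = (\<Prod>j\<in>I-{i}. (g j - g i))"
      by (subst prod.reindex) (use inj in \<open>auto intro: inj_on_subset\<close>)
    finally show "((\<lambda>v. poly p v / (\<Prod>v'\<in>S-{v}. (v' - v))) \<circ> g) i
        = poly p (g i) / ((\<Prod>x\<in>X. (x - g i)) * (\<Prod>j\<in>I-{i}. (g j - g i)))"
      by (simp add: mult.commute)
  qed simp
  moreover have "(\<Sum>v\<in>X. poly p v / (\<Prod>v'\<in>S-{v}. (v' - v))) =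
      (\<Sum>x\<in>X. poly p x / ((\<Prod>x'\<in>X-{x}. (x' - x)) * (\<Prod>j\<in>I. (g j - x))))"
  proof (rule sum.cong)
    fix x assume x: "x \<in> X"
    have "S - {x} = g ` I \<union> (X - {x})" unfolding S_def using x disj by auto
    then have "(\<Prod>v'\<in>S-{x}. (v' - x)) = (\<Prod>v'\<in>g ` I. (v' - x)) * (\<Prod>x'\<in>X-{x}. (x' - x))"
      by (simp only:) (rule prod.union_disjoint, use I X disj in auto)
    also have "(\<Prod>v'\<in>g ` I. (v' - x)) = (\<Prod>j\<in>I. (g j - x))"
      by (subst prod.reindex[OF inj]) simp
    finally show "poly p x / (\<Prod>v'\<in>S-{x}. (v' - x))
        = poly p x / ((\<Prod>x'\<in>X-{x}. (x' - x)) * (\<Prod>j\<in>I. (g j - x)))"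
      by (simp add: mult.commute)
  qed simp
  ultimately show ?thesis by simp
qed

lemma divided_difference_poly_one_extra_node:
  fixes U :: "'b \<Rightarrow> 'a::field" and p :: "'a poly"
  assumes "finite I" "inj_on U I" "w \<notin> U ` I" "degree p < card I"
  shows "(\<Sum>i\<in>I. poly p (U i) / ((w - U i) * (\<Prod>j\<in>I-{i}. (U j - U i))))
       = - (poly p w / (\<Prod>j\<in>I. (U j - w)))"
proof -
  have "(\<Sum>i\<in>I. poly p (U i) / ((\<Prod>x\<in>{w}. (x - U i)) * (\<Prod>j\<in>I-{i}. (U j - U i))))
      + (\<Sum>x\<in>{w}. poly p x / ((\<Prod>x'\<in>{w}-{x}. (x' - x)) * (\<Prod>j\<in>I. (U j - x)))) = 0"
    by (rule divided_difference_poly_eq_0_extra_nodes) (use assms in auto)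
  then show ?thesis by (simp add: eq_neg_iff_add_eq_0)
qed

lemma divided_difference_poly_two_extra_nodes:
  fixes U :: "'b \<Rightarrow> 'a::field" and p :: "'a poly"
  assumes "finite I" "inj_on U I" "0 \<notin> U ` I" "a \<notin> U ` I" "a \<noteq> 0" "degree p \<le> card I"
  shows "(\<Sum>i\<in>I. poly p (U i) / (- U i * (a - U i) * (\<Prod>j\<in>I-{i}. (U j - U i))))
       = poly p a / (a * (\<Prod>j\<in>I. (U j - a))) - poly p 0 / (a * (\<Prod>j\<in>I. U j))"
proof -
  have "(\<Sum>i\<in>I. poly p (U i) / ((\<Prod>x\<in>{0, a}. (x - U i)) * (\<Prod>j\<in>I-{i}. (U j - U i))))
      + (\<Sum>x\<in>{0, a}. poly p x / ((\<Prod>x'\<in>{0, a}-{x}. (x' - x)) * (\<Prod>j\<in>I. (U j - x)))) = 0"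
    by (rule divided_difference_poly_eq_0_extra_nodes) (use assms in auto)
  moreover have "{0, a} - {0} = {a}" "{0, a} - {a} = {0}" using assms(5) by auto
  ultimately show ?thesis using assms(5) by (simp add: eq_neg_iff_add_eq_0[symmetric])
qed

lemma prod_shift_telescope:
  fixes U A B :: "nat \<Rightarrow> 'a::field"
  assumes U: "\<forall>r\<in>{1..N+1}. U r \<noteq> 0" and s: "s \<noteq> 0" and y: "1 \<le> y" "y \<le> N+1"
    and B: "\<forall>r\<in>{1..N+1}-{y}. B r \<noteq> 0"
  shows "(\<Prod>r\<in>{y..N}. (A r / U r) / (B (r+1) / (s * U (r+1)))) * (\<Prod>r\<in>{1..<y}. A r / B r)
       = s ^ (N + 1 - y) * (U (N+1) / U y) * (\<Prod>r\<in>{1..N}. A r) / (\<Prod>r\<in>{1..N+1}-{y}. B r)"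
  using U y B
proof (induction N)
  case 0
  then have "y = 1" by simp
  then show ?case using 0 by simp
next
  case (Suc N)
  show ?case
  proof (cases "y = Suc N + 1")
    case True
    have e: "{1..Suc N + 1} - {y} = {1..<y}" using True by auto
    have e2: "{1..Suc N} = {1..<y}" using True by auto
    show ?thesis unfolding e e2 using True Suc.prems by (simp add: prod_dividef)
  next
    case False
    then have yN: "y \<le> N + 1" using Suc.prems by simp
    have IH: "(\<Prod>r\<in>{y..N}. (A r / U r) / (B (r+1) / (s * U (r+1)))) * (\<Prod>r\<in>{1..<y}. A r / B r)
       = s ^ (N + 1 - y) * (U (N+1) / U y) * (\<Prod>r\<in>{1..N}. A r) / (\<Prod>r\<in>{1..N+1}-{y}. B r)"
      using Suc.IH Suc.prems yN by auto
    have e1: "{y..Suc N} = insert (Suc N) {y..N}" using yN by auto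
    have e2: "{1..Suc N} = insert (Suc N) {1..N}" by auto
    have e3: "{1..Suc N + 1} - {y} = insert (Suc N + 1) ({1..N+1}-{y})" using yN by auto
    have nzB: "(\<Prod>r\<in>{1..N+1}-{y}. B r) \<noteq> 0" using Suc.prems(4) by (subst prod_zero_iff) auto
    have nzB2: "B (Suc N + 1) \<noteq> 0" using Suc.prems(4) yN by auto
    have nzU1: "U (Suc N) \<noteq> 0" using Suc.prems(1) by auto
    have nzU2: "U (Suc N + 1) \<noteq> 0" using Suc.prems(1) by auto
    have nzUy: "U y \<noteq> 0" using Suc.prems(1) Suc.prems(2,3) by auto
    have pw: "s ^ (Suc N + 1 - y) = s * s ^ (N + 1 - y)" using yN by (simp add: Suc_diff_le)
    have "(\<Prod>r\<in>{y..Suc N}. (A r / U r) / (B (r+1) / (s * U (r+1)))) * (\<Prod>r\<in>{1..<y}. A r / B r)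
        = ((A (Suc N) / U (Suc N)) / (B (Suc N + 1) / (s * U (Suc N + 1)))) *
          ((\<Prod>r\<in>{y..N}. (A r / U r) / (B (r+1) / (s * U (r+1)))) * (\<Prod>r\<in>{1..<y}. A r / B r))"
      unfolding e1 by simp
    also have "\<dots> = ((A (Suc N) / U (Suc N)) / (B (Suc N + 1) / (s * U (Suc N + 1)))) *
        (s ^ (N + 1 - y) * (U (N+1) / U y) * (\<Prod>r\<in>{1..N}. A r) / (\<Prod>r\<in>{1..N+1}-{y}. B r))"
      by (simp only: IH)
    also have "\<dots> = s ^ (Suc N + 1 - y) * (U (Suc N + 1) / U y) * (\<Prod>r\<in>{1..Suc N}. A r) / (\<Prod>r\<in>{1..Suc N+1}-{y}. B r)"
      unfolding e2 e3 pw using nzB nzB2 nzU1 nzU2 nzUy s by (simp add: field_simps)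
    finally show ?thesis .
  qed
qed

section \<open>Adding and removing a cell\<close>

lemma part_0[simp]: "part la 0 = 0" by (simp add: part_def)
lemma part_beyond_length: "length la < r \<Longrightarrow> part la r = 0" by (simp add: part_def)

lemma sorted_wrt_ge_iff_part:
  "sorted_wrt (\<ge>) la \<longleftrightarrow> (\<forall>i j. 1 \<le> i \<longrightarrow> i \<le> j \<longrightarrow> j \<le> length la \<longrightarrow> part la j \<le> part la i)"
proof
  assume s: "sorted_wrt (\<ge>) la"
  show "\<forall>i j. 1 \<le> i \<longrightarrow> i \<le> j \<longrightarrow> j \<le> length la \<longrightarrow> part la j \<le> part la i"
  proof (intro allI impI)
    fix i j :: nat assume h: "1 \<le> i" "i \<le> j" "j \<le> length la"
    show "part la j \<le> part la i"
    proof (cases "i = j")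
      case False
      then have "la ! (j - 1) \<le> la ! (i - 1)"
        using sorted_wrt_nth_less[OF s, of "i - 1" "j - 1"] h by auto
      then show ?thesis using h by (simp add: part_def)
    qed simp
  qed
next
  assume h: "\<forall>i j. 1 \<le> i \<longrightarrow> i \<le> j \<longrightarrow> j \<le> length la \<longrightarrow> part la j \<le> part la i"
  show "sorted_wrt (\<ge>) la"
    unfolding sorted_wrt_iff_nth_less
  proof (intro allI impI)
    fix i j assume "i < j" "j < length la"
    then show "la ! j \<le> la ! i"
      using h[rule_format, of "i + 1" "j + 1"] by (simp add: part_def)
  qed
qed

lemma zero_notin_iff_part_pos: "0 \<notin> set la \<longleftrightarrow> (\<forall>r. 1 \<le> r \<longrightarrow> r \<le> length la \<longrightarrow> 0 < part la r)"
proof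
  assume "0 \<notin> set la"
  then show "\<forall>r. 1 \<le> r \<longrightarrow> r \<le> length la \<longrightarrow> 0 < part la r"
    by (auto simp: part_def in_set_conv_nth)
next
  assume h: "\<forall>r. 1 \<le> r \<longrightarrow> r \<le> length la \<longrightarrow> 0 < part la r"
  show "0 \<notin> set la"
  proof
    assume "0 \<in> set la"
    then obtain i where "i < length la" "la ! i = 0" by (auto simp: in_set_conv_nth)
    then show False using h[rule_format, of "i + 1"] by (simp add: part_def)
  qed
qed

lemma is_partition_iff_part:
  "is_partition la \<longleftrightarrow>
    (\<forall>i j. 1 \<le> i \<longrightarrow> i \<le> j \<longrightarrow> j \<le> length la \<longrightarrow> part la j \<le> part la i) \<and>
    (\<forall>r. 1 \<le> r \<longrightarrow> r \<le> length la \<longrightarrow> 0 < part la r)"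
  unfolding is_partition_def sorted_wrt_ge_iff_part zero_notin_iff_part_pos ..

lemma part_mono:
  assumes "is_partition la" "1 \<le> i" "i \<le> j"
  shows "part la j \<le> part la i"
proof (cases "j \<le> length la")
  case True then show ?thesis using assms by (auto simp: is_partition_iff_part)
next
  case False then show ?thesis by (simp add: part_beyond_length)
qed

lemma part_pos:
  assumes "is_partition la" "1 \<le> r" "r \<le> length la"
  shows "0 < part la r"
  using assms by (auto simp: is_partition_iff_part)

lemma part_pos_iff:
  assumes "is_partition la"
  shows "0 < part la r \<longleftrightarrow> 1 \<le> r \<and> r \<le> length la"
  using assms part_pos[OF assms] by (auto simp: part_def)

lemma partition_eqI:
  assumes "is_partition a" "is_partition b" "\<And>r. part a r = part b r"
  shows "a = b"
proof -
  have "length a = length b"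
  proof (rule ccontr)
    assume ne: "length a \<noteq> length b"
    show False
    proof (cases "length a < length b")
      case True
      then have "0 < part b (length b)" using part_pos[OF assms(2)] by simp
      moreover have "part a (length b) = 0" using True by (simp add: part_beyond_length)
      ultimately show False using assms(3) by simp
    next
      case False
      then have "length b < length a" using ne by simp
      then have "0 < part a (length a)" using part_pos[OF assms(1)] by simp
      moreover have "part b (length a) = 0" using \<open>length b < length a\<close> by (simp add: part_beyond_length)
      ultimately show False using assms(3) by simp
    qed
  qed
  moreover have "a ! i = b ! i" if "i < length a" for i
    using assms(3)[of "i+1"] that \<open>length a = length b\<close> by (simp add: part_def)
  ultimately show ?thesis by (rule nth_equalityI)
qed

lemma part_le_sum: "part la r \<le> sum_list la"
  by (auto simp: part_def elem_le_sum_list)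

lemma finite_cells[simp]: "finite (cells la)"
proof -
  have "cells la \<subseteq> {..sum_list la} \<times> {..length la}"
  proof
    fix c assume "c \<in> cells la"
    then obtain x y where c: "c = (x, y)" "1 \<le> x" "1 \<le> y" "x \<le> part la y" by (auto simp: cells_def)
    then have "x \<le> sum_list la" using part_le_sum[of la y] by linarith
    moreover have "y \<le> length la" using c by (auto simp: part_def split: if_splits)
    ultimately show "c \<in> {..sum_list la} \<times> {..length la}" using c by simp
  qed
  then show ?thesis by (rule finite_subset) auto
qed

lemma row_of_cells: "1 \<le> r \<Longrightarrow> {x. (x, r) \<in> cells la} = {1..part la r}"
  by (auto simp: cells_def)

definition addable :: "nat list \<Rightarrow> nat \<Rightarrow> bool" where
  "addable la y \<longleftrightarrow> 1 \<le> y \<and> y \<le> length la + 1 \<and> (y = 1 \<or> part la y < part la (y - 1))"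

definition removable :: "nat list \<Rightarrow> nat \<Rightarrow> bool" where
  "removable la z \<longleftrightarrow> 1 \<le> z \<and> z \<le> length la \<and> part la (z + 1) < part la z"

definition addrow :: "nat list \<Rightarrow> nat \<Rightarrow> nat list" where
  "addrow la y = (if y \<le> length la then la[y - 1 := la ! (y - 1) + 1] else la @ [1])"

definition delrow :: "nat list \<Rightarrow> nat \<Rightarrow> nat list" where
  "delrow la z = (if part la z = 1 then take (z - 1) la else la[z - 1 := la ! (z - 1) - 1])"

lemma part_addrow:
  assumes "1 \<le> y" "y \<le> length la + 1"
  shows "part (addrow la y) r = part la r + (if r = y then 1 else 0)"
proof (cases "y \<le> length la")
  case True
  then have a: "addrow la y = la[y - 1 := la ! (y - 1) + 1]" by (simp add: addrow_def)
  show ?thesis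
  proof (cases "1 \<le> r \<and> r \<le> length la")
    case True
    then have "la[y - 1 := la ! (y - 1) + 1] ! (r - 1) = (if y - 1 = r - 1 then la ! (y - 1) + 1 else la ! (r - 1))"
      using assms \<open>y \<le> length la\<close> by (intro nth_list_update) auto
    moreover have "(y - 1 = r - 1) = (r = y)" using True assms by auto
    ultimately show ?thesis using True by (simp add: a part_def)
  next
    case False
    then show ?thesis using \<open>y \<le> length la\<close> assms by (auto simp: a part_def)
  qed
next
  case False
  then have y: "y = length la + 1" using assms by simp
  then have a: "addrow la y = la @ [1]" by (simp add: addrow_def)
  show ?thesis
  proof (cases "1 \<le> r \<and> r \<le> length la + 1")
    case True
    then show ?thesis unfolding a using y by (auto simp: part_def nth_append)
  next
    case False
    then show ?thesis unfolding a using y by (auto simp: part_def)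
  qed
qed

lemma length_addrow:
  assumes "1 \<le> y" "y \<le> length la + 1"
  shows "length (addrow la y) = max (length la) y"
  using assms by (auto simp: addrow_def)

lemma is_partition_addrow:
  assumes "is_partition la" "addable la y"
  shows "is_partition (addrow la y)"
proof -
  have y: "1 \<le> y" "y \<le> length la + 1" using assms(2) by (auto simp: addable_def)
  note P = part_addrow[OF y]
  show ?thesis
    unfolding is_partition_iff_part
  proof (intro conjI allI impI)
    fix i j assume h: "1 \<le> i" "i \<le> j" "j \<le> length (addrow la y)"
    have m: "part la j \<le> part la i" using part_mono[OF assms(1) h(1,2)] .
    show "part (addrow la y) j \<le> part (addrow la y) i"
    proof (cases "j = y \<and> i \<noteq> y")
      case True
      then have "i \<le> y - 1" using h by auto
      then have "part la (y - 1) \<le> part la i" using part_mono[OF assms(1) h(1)] by simp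
      moreover have "part la y < part la (y - 1)" using assms(2) True h by (auto simp: addable_def)
      ultimately show ?thesis using True P by simp
    next
      case False
      then show ?thesis using m P by auto
    qed
  next
    fix r assume h: "1 \<le> r" "r \<le> length (addrow la y)"
    show "0 < part (addrow la y) r"
    proof (cases "r = y")
      case False
      then have "r \<le> length la" using h length_addrow[OF y] y by auto
      then show ?thesis using P part_pos[OF assms(1) h(1)] by simp
    qed (simp add: P)
  qed
qed

lemma cells_addrow:
  assumes "1 \<le> y" "y \<le> length la + 1"
  shows "cells (addrow la y) = insert (part la y + 1, y) (cells la)"
  using assms by (auto simp: cells_def part_addrow)

lemma addrow_new_notin: "(part la y + 1, y) \<notin> cells la"
  by (simp add: cells_def)

lemma addrow_in_Ups:
  assumes "is_partition la" "addable la y"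
  shows "addrow la y \<in> Ups la"
proof -
  have y: "1 \<le> y" "y \<le> length la + 1" using assms(2) by (auto simp: addable_def)
  have "cells (addrow la y) - cells la = {(part la y + 1, y)}"
    using cells_addrow[OF y] addrow_new_notin[of la y] by auto
  then show ?thesis unfolding Ups_def using is_partition_addrow[OF assms] cells_addrow[OF y] by auto
qed

lemma part_of_cells_insert:
  assumes cn: "cells nu = insert (x0, y0) (cells la)" and nin: "(x0, y0) \<notin> cells la"
  shows "part nu r = part la r + (if r = y0 then 1 else 0)"
proof (cases "r = 0")
  case True
  have "(x0, y0) \<in> cells nu" using cn by simp
  then show ?thesis using True by (auto simp: cells_def)
next
  case False
  then have r1: "1 \<le> r" by simp
  have "{x. (x, r) \<in> cells nu} = (if r = y0 then insert x0 {x. (x, r) \<in> cells la} else {x. (x, r) \<in> cells la})"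
    using cn by auto
  then have e: "{1..part nu r} = (if r = y0 then insert x0 {1..part la r} else {1..part la r})"
    unfolding row_of_cells[OF r1, of nu, symmetric] row_of_cells[OF r1, of la, symmetric] .
  show ?thesis
  proof (cases "r = y0")
    case True
    have "x0 \<notin> {1..part la r}" using cn nin True by (auto simp: cells_def)
    then have "card {1..part nu r} = card {1..part la r} + 1" using e True by simp
    then show ?thesis using True by simp
  next
    case False
    then have "{1..part nu r} = {1..part la r}" using e by (simp only: if_False)
    then have "card {1..part nu r} = card {1..part la r}" by (rule arg_cong)
    then show ?thesis using False by simp
  qed
qed

lemma addable_if_part_eq:
  assumes nu: "is_partition nu" and y0: "1 \<le> y0"
    and pr: "\<And>r. part nu r = part la r + (if r = y0 then 1 else 0)"
  shows "addable la y0"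
proof -
  have "y0 \<le> length la + 1"
  proof (rule ccontr)
    assume "\<not> ?thesis"
    then have "length la < y0 - 1" "1 \<le> y0 - 1" by auto
    then have "part nu (y0 - 1) = 0" using pr part_beyond_length[of la "y0 - 1"] by auto
    moreover have "part nu y0 \<le> part nu (y0 - 1)" using part_mono[OF nu \<open>1 \<le> y0 - 1\<close>] by simp
    ultimately show False using pr by simp
  qed
  moreover have "y0 = 1 \<or> part la y0 < part la (y0 - 1)"
  proof (cases "y0 = 1")
    case False
    then have "1 \<le> y0 - 1" using y0 by simp
    then have "part nu y0 \<le> part nu (y0 - 1)" using part_mono[OF nu] by simp
    then show ?thesis using pr False y0 by (simp split: if_splits)
  qed simp
  ultimately show ?thesis using y0 by (simp add: addable_def)
qed

lemma mem_Ups_imp_addrow: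
  assumes la: "is_partition la" and nu: "nu \<in> Ups la"
  shows "\<exists>y. addable la y \<and> nu = addrow la y"
proof -
  have nup: "is_partition nu" and sub: "cells la \<subseteq> cells nu" and c1: "card (cells nu - cells la) = 1"
    using nu by (auto simp: Ups_def)
  obtain x0 y0 where d: "cells nu - cells la = {(x0, y0)}" using c1 by (auto simp: card_Suc_eq)
  have cn: "cells nu = insert (x0, y0) (cells la)" and nin: "(x0, y0) \<notin> cells la"
    using d sub by auto
  note pr = part_of_cells_insert[OF cn nin]
  have "1 \<le> y0" using cn by (auto simp: cells_def)
  then have ad: "addable la y0" using addable_if_part_eq[OF nup _ pr] by blast
  have y: "1 \<le> y0" "y0 \<le> length la + 1" using ad by (auto simp: addable_def)
  have "nu = addrow la y0"
    by (rule partition_eqI[OF nup is_partition_addrow[OF la ad]]) (simp add: pr part_addrow[OF y])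
  then show ?thesis using ad by blast
qed

lemma Ups_eq:
  assumes "is_partition la"
  shows "Ups la = addrow la ` {y. addable la y}"
  using mem_Ups_imp_addrow[OF assms] addrow_in_Ups[OF assms] by blast

lemma inj_on_addrow: "inj_on (addrow la) {y. addable la y}"
proof (rule inj_onI, rule ccontr)
  fix y1 y2 assume ad: "y1 \<in> {y. addable la y}" "y2 \<in> {y. addable la y}"
    and eq: "addrow la y1 = addrow la y2" and ne: "y1 \<noteq> y2"
  have "part (addrow la y1) y1 = part (addrow la y2) y1" using eq by simp
  then show False using ne ad by (simp add: addable_def part_addrow)
qed

lemma part_delrow:
  assumes "is_partition la" "removable la z"
  shows "part (delrow la z) r = part la r - (if r = z then 1 else 0)"
proof -
  have z: "1 \<le> z" "z \<le> length la" "part la (z + 1) < part la z" using assms(2) by (auto simp: removable_def)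
  show ?thesis
  proof (cases "part la z = 1")
    case True
    have "z = length la"
    proof (rule ccontr)
      assume "z \<noteq> length la"
      then have "z + 1 \<le> length la" using z by simp
      then have "0 < part la (z + 1)" using part_pos[OF assms(1)] by simp
      then show False using z True by simp
    qed
    then show ?thesis using True z by (auto simp: delrow_def part_def min_def)
  next
    case False
    then show ?thesis using z by (auto simp: delrow_def part_def nth_list_update)
  qed
qed

lemma length_delrow_le: "length (delrow la z) \<le> length la"
  by (simp add: delrow_def)

lemma is_partition_delrow:
  assumes la: "is_partition la" and rz: "removable la z"
  shows "is_partition (delrow la z)"
proof -
  have z: "1 \<le> z" "z \<le> length la" "part la (z + 1) < part la z" using rz by (auto simp: removable_def)
  note P = part_delrow[OF la rz]
  have L: "length (delrow la z) \<le> length la" by (rule length_delrow_le)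
  show ?thesis
    unfolding is_partition_iff_part
  proof (intro conjI allI impI)
    fix i j assume h: "1 \<le> i" "i \<le> j" "j \<le> length (delrow la z)"
    have m: "part la j \<le> part la i" using part_mono[OF la h(1,2)] .
    show "part (delrow la z) j \<le> part (delrow la z) i"
    proof (cases "i = z \<and> j \<noteq> z")
      case True
      then have "z + 1 \<le> j" using h by auto
      then have "part la j \<le> part la (z + 1)" using part_mono[OF la] by simp
      then show ?thesis using True P z by simp
    next
      case False
      then show ?thesis using m P by auto
    qed
  next
    fix r assume h: "1 \<le> r" "r \<le> length (delrow la z)"
    have "r \<le> length la" using h L by simp
    have pos: "0 < part la r" using part_pos[OF la h(1) \<open>r \<le> length la\<close>] .
    show "0 < part (delrow la z) r"
    proof (cases "r = z")
      case True
      show ?thesis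
      proof (cases "part la z = 1")
        case True
        then have "delrow la z = take (z - 1) la" by (simp add: delrow_def)
        then show ?thesis using h \<open>r = z\<close> z by simp
      next
        case False
        then show ?thesis using P True pos by simp
      qed
    next
      case False then show ?thesis using P pos by simp
    qed
  qed
qed

lemma addable_delrow:
  assumes la: "is_partition la" and rz: "removable la z"
  shows "addable (delrow la z) z"
proof -
  have z: "1 \<le> z" "z \<le> length la" "part la (z + 1) < part la z" using rz by (auto simp: removable_def)
  note P = part_delrow[OF la rz]
  have "z \<le> length (delrow la z) + 1"
  proof (rule ccontr)
    assume "\<not> ?thesis"
    then have "z - 1 > length (delrow la z)" "1 \<le> z - 1" by auto
    then have "part (delrow la z) (z - 1) = 0" by (simp add: part_beyond_length)
    moreover have "part la z \<le> part la (z - 1)" using part_mono[OF la \<open>1 \<le> z - 1\<close>] by simp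
    moreover have "z - 1 \<noteq> z" using z by simp
    ultimately show False using P[of "z - 1"] z by simp
  qed
  moreover have "z = 1 \<or> part (delrow la z) z < part (delrow la z) (z - 1)"
  proof (cases "z = 1")
    case False
    then have "1 \<le> z - 1" using z by simp
    then have "part la z \<le> part la (z - 1)" using part_mono[OF la] by simp
    moreover have "z - 1 \<noteq> z" "part la z \<ge> 1" using z by auto
    ultimately show ?thesis using P[of z] P[of "z - 1"] using False by simp
  qed simp
  ultimately show ?thesis using z by (simp add: addable_def)
qed

lemma addrow_delrow:
  assumes la: "is_partition la" and rz: "removable la z"
  shows "addrow (delrow la z) z = la"
proof -
  have ad: "addable (delrow la z) z" by (rule addable_delrow[OF la rz])
  have y: "1 \<le> z" "z \<le> length (delrow la z) + 1" using ad by (auto simp: addable_def)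
  have z: "part la (z + 1) < part la z" using rz by (auto simp: removable_def)
  show ?thesis
    by (rule partition_eqI[OF is_partition_addrow[OF is_partition_delrow[OF la rz] ad] la])
       (use z in \<open>simp add: part_addrow[OF y] part_delrow[OF la rz]\<close>)
qed

lemma Downs_eq:
  assumes la: "is_partition la"
  shows "Downs la = delrow la ` {z. removable la z}"
proof
  show "Downs la \<subseteq> delrow la ` {z. removable la z}"
  proof
    fix mu assume "mu \<in> Downs la"
    then have mup: "is_partition mu" and "la \<in> Ups mu" using la by (auto simp: Downs_def Ups_def)
    then obtain z where ad: "addable mu z" and e: "la = addrow mu z" using mem_Ups_imp_addrow by blast
    have y: "1 \<le> z" "z \<le> length mu + 1" using ad by (auto simp: addable_def)
    have pl: "part la r = part mu r + (if r = z then 1 else 0)" for r using e part_addrow[OF y] by simp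
    have rz: "removable la z"
    proof -
      have "part la z \<ge> 1" using pl by simp
      then have "z \<le> length la" using part_pos_iff[OF la, of z] by simp
      moreover have "part mu (z + 1) \<le> part mu z" using part_mono[OF mup y(1)] by simp
      ultimately show ?thesis using pl y by (simp add: removable_def)
    qed
    have "mu = delrow la z"
      by (rule partition_eqI[OF mup is_partition_delrow[OF la rz]]) (simp add: part_delrow[OF la rz] pl)
    then show "mu \<in> delrow la ` {z. removable la z}" using rz by blast
  qed
next
  show "delrow la ` {z. removable la z} \<subseteq> Downs la"
  proof
    fix mu assume "mu \<in> delrow la ` {z. removable la z}"
    then obtain z where rz: "removable la z" and e: "mu = delrow la z" by blast
    have "addrow mu z \<in> Ups mu"
      using addrow_in_Ups[OF is_partition_delrow[OF la rz] addable_delrow[OF la rz]] e by simp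
    then have "la \<in> Ups mu" using addrow_delrow[OF la rz] e by simp
    then show "mu \<in> Downs la" using is_partition_delrow[OF la rz] e by (auto simp: Downs_def Ups_def)
  qed
qed

lemma inj_on_delrow:
  assumes la: "is_partition la"
  shows "inj_on (delrow la) {z. removable la z}"
proof (rule inj_onI, rule ccontr)
  fix z1 z2 assume rz: "z1 \<in> {z. removable la z}" "z2 \<in> {z. removable la z}"
    and eq: "delrow la z1 = delrow la z2" and ne: "z1 \<noteq> z2"
  have "part (delrow la z1) z1 = part (delrow la z2) z1" using eq by simp
  moreover have "part la z1 \<ge> 1" using rz by (simp add: removable_def)
  ultimately show False using ne rz by (simp add: part_delrow[OF la])
qed

lemma delrow_neq:
  assumes "is_partition la" "removable la z"
  shows "delrow la z \<noteq> la"
  using part_delrow[OF assms, of z] assms(2) by (auto simp: removable_def)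

lemma finite_Downs:
  assumes "is_partition la"
  shows "finite (Downs la)"
  unfolding Downs_eq[OF assms] by (rule finite_imageI, rule finite_subset[of _ "{1..length la}"])
    (auto simp: removable_def)

lemma sum_Downs_star:
  assumes "is_partition la"
  shows "(\<Sum>mu\<in>Downs_star la. f mu) = f la + (\<Sum>mu\<in>Downs la. f mu)"
proof -
  have "la \<notin> Downs la" by (simp add: Downs_def)
  then show ?thesis unfolding Downs_star_def using finite_Downs[OF assms] by simp
qed

section \<open>Arms and legs after adding a cell\<close>

lemma conj_eqI:
  assumes la: "is_partition la" and x: "1 \<le> x" and r: "r = 0 \<or> x \<le> part la r"
    and r1: "part la (r + 1) < x"
  shows "conj la x = r"
proof -
  have "{y. 1 \<le> y \<and> x \<le> part la y} = {1..r}"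
  proof (intro set_eqI iffI)
    fix y assume h: "y \<in> {y. 1 \<le> y \<and> x \<le> part la y}"
    have "y \<le> r"
    proof (rule ccontr)
      assume "\<not> y \<le> r"
      then have "part la y \<le> part la (r + 1)" using part_mono[OF la, of "r+1" y] by simp
      then show False using h r1 by simp
    qed
    then show "y \<in> {1..r}" using h by simp
  next
    fix y assume h: "y \<in> {1..r}"
    then have "x \<le> part la r" using r by simp
    moreover have "part la r \<le> part la y" using part_mono[OF la, of y r] h by simp
    ultimately show "y \<in> {y. 1 \<le> y \<and> x \<le> part la y}" using h by simp
  qed
  then show ?thesis by (simp add: conj_def)
qed

lemma prod_row_by_conj:
  assumes la: "is_partition la" and N: "length la \<le> N" and y: "1 \<le> y" "y \<le> N + 1"
  shows "(\<Prod>x\<in>{1..part la y}. F x (conj la x)) =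
         (\<Prod>r\<in>{y..N}. \<Prod>x\<in>{part la (r + 1) + 1..part la r}. F x r)"
  using y
proof (induction "N + 1 - y" arbitrary: y)
  case 0
  then have "y = N + 1" by simp
  then show ?case using N by (simp add: part_beyond_length)
next
  case (Suc m)
  then have yN: "y \<le> N" and m: "m = N + 1 - (y + 1)" by auto
  have mono: "part la (y + 1) \<le> part la y" using part_mono[OF la Suc.prems(1)] by simp
  have split: "{1..part la y} = {1..part la (y+1)} \<union> {part la (y + 1) + 1..part la y}"
    using mono by auto
  have conj_row: "conj la x = y" if "x \<in> {part la (y + 1) + 1..part la y}" for x
    using that by (intro conj_eqI[OF la]) auto
  have "(\<Prod>x\<in>{1..part la y}. F x (conj la x)) =
        (\<Prod>x\<in>{1..part la (y+1)}. F x (conj la x)) * (\<Prod>x\<in>{part la (y + 1) + 1..part la y}. F x y)"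
    unfolding split by (subst prod.union_disjoint) (auto simp: conj_row intro!: prod.cong)
  also have "(\<Prod>x\<in>{1..part la (y+1)}. F x (conj la x)) =
         (\<Prod>r\<in>{y+1..N}. \<Prod>x\<in>{part la (r + 1) + 1..part la r}. F x r)"
    using Suc.hyps(1)[OF m] yN by simp
  also have "{y..N} = insert y {y+1..N}" using yN by auto
  ultimately show ?case by (simp add: ac_simps)
qed

context
  fixes ka :: "nat list" and y :: nat
  assumes ka: "is_partition ka" and ad: "addable ka y"
begin

private lemma y_bounds: "1 \<le> y" "y \<le> length ka + 1"
  using ad by (auto simp: addable_def)

lemma cells_addrow_diff: "cells (addrow ka y) - cells ka = {(part ka y + 1, y)}"
  using cells_addrow[OF y_bounds] addrow_new_notin[of ka y] by auto

lemma Rset_addrow: "Rset (addrow ka y) ka = (\<lambda>x. (x, y)) ` {1..part ka y}"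
  unfolding Rset_def cells_addrow_diff using y_bounds by (auto simp: cells_def)

lemma new_column_cell_iff: "(part ka y + 1, r) \<in> cells ka \<longleftrightarrow> 1 \<le> r \<and> r < y"
proof
  assume "(part ka y + 1, r) \<in> cells ka"
  then have h: "1 \<le> r" "part ka y + 1 \<le> part ka r" by (auto simp: cells_def)
  have "r < y"
  proof (rule ccontr)
    assume "\<not> r < y"
    then have "part ka r \<le> part ka y" using part_mono[OF ka y_bounds(1)] by simp
    then show False using h by simp
  qed
  then show "1 \<le> r \<and> r < y" using h by simp
next
  assume h: "1 \<le> r \<and> r < y"
  then have "part ka y < part ka (y - 1)" using ad by (simp add: addable_def)
  moreover have "r \<le> y - 1" using h by arith
  then have "part ka (y - 1) \<le> part ka r" using part_mono[OF ka, of r "y - 1"] h by simp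
  ultimately show "(part ka y + 1, r) \<in> cells ka" using h by (simp add: cells_def)
qed

lemma Cset_addrow: "Cset (addrow ka y) ka = (\<lambda>r. (part ka y + 1, r)) ` {1..<y}"
proof -
  have "Cset (addrow ka y) ka = {c \<in> cells ka. fst c = part ka y + 1}"
    unfolding Cset_def cells_addrow_diff by auto
  also have "\<dots> = (\<lambda>r. (part ka y + 1, r)) ` {1..<y}"
    using new_column_cell_iff by force
  finally show ?thesis .
qed

lemma conj_addrow_other: "x \<noteq> part ka y + 1 \<Longrightarrow> conj (addrow ka y) x = conj ka x"
  unfolding conj_def part_addrow[OF y_bounds] by (rule arg_cong[where f = card]) auto

lemma conj_new_column: "conj ka (part ka y + 1) = y - 1"
proof (rule conj_eqI[OF ka])
  show "y - 1 = 0 \<or> part ka y + 1 \<le> part ka (y - 1)"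
    using ad by (auto simp: addable_def)
  show "part ka (y - 1 + 1) < part ka y + 1" using y_bounds by simp
qed simp

lemma conj_addrow_new_column: "conj (addrow ka y) (part ka y + 1) = y"
proof (rule conj_eqI[OF is_partition_addrow[OF ka ad]])
  show "y = 0 \<or> part ka y + 1 \<le> part (addrow ka y) y" by (simp add: part_addrow[OF y_bounds])
  have "part ka (y + 1) \<le> part ka y" using part_mono[OF ka y_bounds(1)] by simp
  then show "part (addrow ka y) (y + 1) < part ka y + 1" by (simp add: part_addrow[OF y_bounds])
qed simp

lemma arm_leg_addrow_Rset:
  assumes "c \<in> Rset (addrow ka y) ka"
  shows "arm (addrow ka y) c = arm ka c + 1" "leg (addrow ka y) c = leg ka c"
  using assms unfolding Rset_addrow
  by (auto simp: arm_def leg_def part_addrow[OF y_bounds] conj_addrow_other)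

lemma arm_leg_addrow_Cset:
  assumes "c \<in> Cset (addrow ka y) ka"
  shows "arm (addrow ka y) c = arm ka c" "leg (addrow ka y) c = leg ka c + 1"
  using assms y_bounds unfolding Cset_addrow
  by (auto simp: arm_def leg_def part_addrow[OF y_bounds] conj_new_column[simplified]
      conj_addrow_new_column[simplified])

lemma prod_Rset_addrow_telescope:
  fixes \<phi> :: "int \<Rightarrow> int \<Rightarrow> 'a::field"
  assumes nz: "\<And>a l. 0 \<le> a \<Longrightarrow> 0 \<le> l \<Longrightarrow> \<phi> a l \<noteq> 0" and N: "length ka \<le> N"
  shows "(\<Prod>c\<in>Rset (addrow ka y) ka. \<phi> (arm ka c) (leg ka c) / \<phi> (arm ka c + 1) (leg ka c)) =
    (\<Prod>r\<in>{y..N}. \<phi> (int (part ka y) - int (part ka r)) (int r - int y) /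
                  \<phi> (int (part ka y) - int (part ka (r + 1))) (int r - int y))"
proof -
  define k where "k = part ka y"
  define F where "F x r = \<phi> (int k - int x) (int r - int y) / \<phi> (int k - int x + 1) (int r - int y)"
    for x r :: nat
  have "(\<Prod>c\<in>Rset (addrow ka y) ka. \<phi> (arm ka c) (leg ka c) / \<phi> (arm ka c + 1) (leg ka c))
      = (\<Prod>x\<in>{1..k}. F x (conj ka x))"
    unfolding Rset_addrow by (subst prod.reindex) (auto simp: inj_on_def F_def arm_def leg_def k_def)
  also have "\<dots> = (\<Prod>r\<in>{y..N}. \<Prod>x\<in>{part ka (r + 1) + 1..part ka r}. F x r)"
    unfolding k_def by (rule prod_row_by_conj[OF ka N y_bounds(1)]) (use y_bounds N in simp)
  also have "\<dots> = (\<Prod>r\<in>{y..N}. \<phi> (int k - int (part ka r)) (int r - int y) /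
                  \<phi> (int k - int (part ka (r + 1))) (int r - int y))"
  proof (rule prod.cong)
    fix r assume r: "r \<in> {y..N}"
    define f where "f x = \<phi> (int k - int x) (int r - int y)" for x :: nat
    have "(\<Prod>x\<in>{part ka (r + 1) + 1..part ka r}. F x r)
        = (\<Prod>x = Suc (part ka (r + 1))..part ka r. f x / f (x - 1))"
      by (rule prod.cong) (auto simp: F_def f_def of_nat_diff algebra_simps)
    also have "\<dots> = f (part ka r) / f (part ka (r + 1))"
    proof (rule prod_telescope'')
      show "part ka (r + 1) \<le> part ka r" using part_mono[OF ka, of r "r + 1"] r y_bounds by simp
      have "part ka r \<le> k" unfolding k_def using part_mono[OF ka y_bounds(1)] r by simp
      then show "f x \<noteq> 0" if "x \<in> {part ka (r + 1)..part ka r}" for x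
        unfolding f_def using that r by (intro nz) auto
    qed
    finally show "(\<Prod>x\<in>{part ka (r + 1) + 1..part ka r}. F x r) =
        \<phi> (int k - int (part ka r)) (int r - int y) / \<phi> (int k - int (part ka (r + 1))) (int r - int y)"
      by (simp add: f_def)
  qed simp
  finally show ?thesis by (simp add: k_def)
qed

lemma prod_Cset_addrow:
  "(\<Prod>c\<in>Cset (addrow ka y) ka. \<psi> (arm ka c) (leg ka c)) =
   (\<Prod>r\<in>{1..<y}. \<psi> (int (part ka r) - int (part ka y) - 1) (int y - 1 - int r))"
  unfolding Cset_addrow using y_bounds
  by (subst prod.reindex)
    (auto simp: inj_on_def arm_def leg_def conj_new_column[simplified] algebra_simps intro!: prod.cong)

lemma nfun_addrow: "nfun (addrow ka y) = nfun ka + (int y - 1)"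
proof -
  define k where "k = part ka y"
  have cr: "cells (addrow ka y) = insert (k + 1, y) (cells ka)" and nin: "(k + 1, y) \<notin> cells ka"
    using cells_addrow[OF y_bounds] addrow_new_notin[of ka y] k_def by auto
  have l0: "leg (addrow ka y) (k + 1, y) = 0" using conj_addrow_new_column k_def by (simp add: leg_def)
  have lc: "leg (addrow ka y) c = leg ka c + of_bool (fst c = k + 1)" if "c \<in> cells ka" for c
  proof (cases "fst c = k + 1")
    case True
    then show ?thesis using conj_addrow_new_column conj_new_column k_def y_bounds by (simp add: leg_def)
  next
    case False
    then show ?thesis using conj_addrow_other k_def by (simp add: leg_def)
  qed
  have ce: "cells ka \<inter> {c. fst c = k + 1} = (\<lambda>y'. (k + 1, y')) ` {1..<y}"
  proof (intro set_eqI)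
    fix c :: "nat \<times> nat"
    obtain a b where c: "c = (a, b)" by fastforce
    show "c \<in> cells ka \<inter> {c. fst c = k + 1} \<longleftrightarrow> c \<in> (\<lambda>y'. (k + 1, y')) ` {1..<y}"
      unfolding c using new_column_cell_iff[of b] k_def by auto
  qed
  have cc: "card (cells ka \<inter> {c. fst c = k + 1}) = y - 1"
    unfolding ce by (subst card_image) (auto simp: inj_on_def)
  have "nfun (addrow ka y) = leg (addrow ka y) (k + 1, y) + (\<Sum>c\<in>cells ka. leg (addrow ka y) c)"
    unfolding nfun_def cr using nin by simp
  also have "(\<Sum>c\<in>cells ka. leg (addrow ka y) c) = (\<Sum>c\<in>cells ka. leg ka c + of_bool (fst c = k + 1))"
    by (rule sum.cong) (auto simp: lc)
  also have "\<dots> = nfun ka + int (y - 1)"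
    by (simp add: sum.distrib nfun_def cc[simplified])
  finally show ?thesis using l0 y_bounds by simp
qed

lemma nfun'_addrow: "nfun' (addrow ka y) = nfun' ka + int (part ka y)"
proof -
  define k where "k = part ka y"
  have cr: "cells (addrow ka y) = insert (k + 1, y) (cells ka)" and nin: "(k + 1, y) \<notin> cells ka"
    using cells_addrow[OF y_bounds] addrow_new_notin[of ka y] k_def by auto
  have l0: "arm (addrow ka y) (k + 1, y) = 0" using k_def by (simp add: arm_def part_addrow[OF y_bounds])
  have lc: "arm (addrow ka y) c = arm ka c + of_bool (snd c = y)" if "c \<in> cells ka" for c
    by (simp add: arm_def part_addrow[OF y_bounds])
  have ce: "cells ka \<inter> {c. snd c = y} = (\<lambda>x. (x, y)) ` {1..k}"
    using y_bounds k_def by (auto simp: cells_def)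
  have cc: "card (cells ka \<inter> {c. snd c = y}) = k"
    unfolding ce by (subst card_image) (auto simp: inj_on_def)
  have "nfun' (addrow ka y) = arm (addrow ka y) (k + 1, y) + (\<Sum>c\<in>cells ka. arm (addrow ka y) c)"
    unfolding nfun'_def cr using nin by simp
  also have "(\<Sum>c\<in>cells ka. arm (addrow ka y) c) = (\<Sum>c\<in>cells ka. arm ka c + of_bool (snd c = y))"
    by (rule sum.cong) (auto simp: lc)
  also have "\<dots> = nfun' ka + int k"
    by (simp add: sum.distrib nfun'_def cc)
  finally show ?thesis using l0 k_def by simp
qed

end

lemma nfun_delrow:
  assumes la: "is_partition la" and rz: "removable la z"
  shows "nfun la = nfun (delrow la z) + (int z - 1)"
  using nfun_addrow[OF is_partition_delrow[OF la rz] addable_delrow[OF la rz]] addrow_delrow[OF la rz]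
  by simp

lemma nfun'_delrow:
  assumes la: "is_partition la" and rz: "removable la z"
  shows "nfun' la = nfun' (delrow la z) + int (part la z) - 1"
proof -
  have "part la z \<ge> 1" using rz by (simp add: removable_def)
  then show ?thesis
    using nfun'_addrow[OF is_partition_delrow[OF la rz] addable_delrow[OF la rz]] addrow_delrow[OF la rz]
    by (simp add: part_delrow[OF la rz] of_nat_diff)
qed

lemma Bexp_delrow_addrow:
  assumes "is_partition la" "removable la z" "addable la y"
  shows "Bexp la (delrow la z) (addrow la y) = int y - int z"
  using nfun_addrow[OF assms(1,3)] nfun_delrow[OF assms(1,2)] by (simp add: Bexp_def)

lemma Aexp_delrow_addrow:
  assumes "is_partition la" "removable la z" "addable la y"
  shows "Aexp la (delrow la z) (addrow la y) = int (part la z) - 1 - int (part la y)"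
  using nfun'_addrow[OF assms(1,3)] nfun'_delrow[OF assms(1,2)] by (simp add: Aexp_def)

section \<open>Row variables and closed forms of alpha and alphabar\<close>

locale qt_generic =
  fixes q t :: real
  assumes q_nonzero: "q \<noteq> 0" and t_nonzero: "t \<noteq> 0"
    and generic: "\<And>i j :: int. (i, j) \<noteq> (0, 0) \<Longrightarrow> q powi i * t powi j \<noteq> 1"
begin

definition mon :: "int \<Rightarrow> int \<Rightarrow> real" where
  "mon i j = q powi i * t powi j"

lemma mon_divide: "mon a b / mon c d = mon (a - c) (b - d)"
  unfolding mon_def using q_nonzero t_nonzero by (simp add: power_int_diff)

lemma mon_nonzero: "mon a b \<noteq> 0"
  unfolding mon_def using q_nonzero t_nonzero by simp

lemma mon_eq_iff: "mon a b = mon c d \<longleftrightarrow> a = c \<and> b = d"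
proof
  assume "mon a b = mon c d"
  then have "mon (a - c) (b - d) = 1" using mon_nonzero by (simp flip: mon_divide)
  then show "a = c \<and> b = d" using generic[of "a - c" "b - d"] unfolding mon_def by auto
qed simp

lemma t_mult_mon: "t * mon a b = mon a (b + 1)"
  unfolding mon_def using t_nonzero by (simp add: power_int_add mult.left_commute)

lemma q_mult_mon: "q * mon a b = mon (a + 1) b"
  unfolding mon_def using q_nonzero by (simp add: power_int_add)

lemma mon_diff_divide: "(mon a b - mon c d) / mon a b = 1 - mon (c - a) (d - b)"
  using mon_nonzero[of a b] by (simp add: diff_divide_distrib mon_divide)

lemma br_eq_mon: "br q t i j = 1 - mon i j"
  by (simp add: br_def mon_def)

lemma br_nonzero: "(i, j) \<noteq> (0, 0) \<Longrightarrow> br q t i j \<noteq> 0"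
  using generic by (simp add: br_def)

lemma q_neq_1: "q \<noteq> 1"
  using mon_eq_iff[of 1 0 0 0] by (auto simp: mon_def)

lemma t_neq_1: "t \<noteq> 1"
  using mon_eq_iff[of 0 1 0 0] by (auto simp: mon_def)

definition rowvar :: "nat list \<Rightarrow> nat \<Rightarrow> real" where
  "rowvar la r = mon (int (part la r)) (- int r)"

lemma rowvar_nonzero: "rowvar la r \<noteq> 0"
  by (simp add: rowvar_def mon_nonzero)

lemma rowvar_eq_iff: "rowvar la r = rowvar la s \<longleftrightarrow> r = s"
  by (auto simp: rowvar_def mon_eq_iff)

lemma t_rowvar_eq_rowvar_iff: "t * rowvar la r = rowvar la s \<longleftrightarrow> r = s + 1 \<and> part la r = part la s"
  by (auto simp: rowvar_def t_mult_mon mon_eq_iff)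

lemma rowvar_neq_q_rowvar: "rowvar la r \<noteq> q * rowvar la s"
  by (auto simp: rowvar_def q_mult_mon mon_eq_iff)

lemma t_rowvar_neq_q_rowvar:
  assumes "is_partition la" "1 \<le> s"
  shows "t * rowvar la r \<noteq> q * rowvar la s"
proof
  assume "t * rowvar la r = q * rowvar la s"
  then have "r = s + 1" "part la r = part la s + 1"
    by (auto simp: rowvar_def t_mult_mon q_mult_mon mon_eq_iff)
  then show False using part_mono[OF assms, of "s + 1"] by simp
qed

lemma rowvar_delrow:
  assumes "is_partition la" "removable la z"
  shows "rowvar (delrow la z) r = (if r = z then rowvar la z / q else rowvar la r)"
proof -
  have "part la z \<ge> 1" using assms(2) by (simp add: removable_def)
  then have "int (part la z - 1) = int (part la z) - 1" by simp
  moreover have "rowvar la z = q * mon (int (part la z) - 1) (- int z)"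
    by (simp add: rowvar_def q_mult_mon)
  ultimately show ?thesis using q_nonzero by (auto simp: rowvar_def part_delrow[OF assms])
qed

lemma alpha_addrow_rowwise:
  assumes ka: "is_partition ka" and ad: "addable ka y" and N: "length ka \<le> N"
  shows "alpha q t (addrow ka y) ka =
    (\<Prod>r\<in>{y..N}. br q t (int (part ka y) - int (part ka r)) (int r - int y + 1) /
                  br q t (int (part ka y) - int (part ka (r + 1))) (int r - int y + 1)) *
    (\<Prod>r\<in>{1..<y}. br q t (int (part ka r) - int (part ka y)) (int y - 1 - int r) /
                   br q t (int (part ka r) - int (part ka y)) (int y - int r))"
proof -
  have rows: "(\<Prod>c\<in>Rset (addrow ka y) ka. br q t (arm ka c) (leg ka c + 1) /
          br q t (arm (addrow ka y) c) (leg (addrow ka y) c + 1))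
      = (\<Prod>r\<in>{y..N}. br q t (int (part ka y) - int (part ka r)) (int r - int y + 1) /
                  br q t (int (part ka y) - int (part ka (r + 1))) (int r - int y + 1))"
  proof -
    have "(\<Prod>c\<in>Rset (addrow ka y) ka. br q t (arm ka c) (leg ka c + 1) /
            br q t (arm (addrow ka y) c) (leg (addrow ka y) c + 1))
        = (\<Prod>c\<in>Rset (addrow ka y) ka. br q t (arm ka c) (leg ka c + 1) / br q t (arm ka c + 1) (leg ka c + 1))"
      by (rule prod.cong) (simp_all add: arm_leg_addrow_Rset[OF ka ad])
    also have "\<dots> = (\<Prod>r\<in>{y..N}. br q t (int (part ka y) - int (part ka r)) (int r - int y + 1) /
                    br q t (int (part ka y) - int (part ka (r + 1))) (int r - int y + 1))"
      by (rule prod_Rset_addrow_telescope[OF ka ad _ N, where \<phi> = "\<lambda>a l. br q t a (l + 1)"])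
        (simp add: br_nonzero)
    finally show ?thesis .
  qed
  have cols: "(\<Prod>c\<in>Cset (addrow ka y) ka. br q t (arm ka c + 1) (leg ka c) /
          br q t (arm (addrow ka y) c + 1) (leg (addrow ka y) c))
      = (\<Prod>r\<in>{1..<y}. br q t (int (part ka r) - int (part ka y)) (int y - 1 - int r) /
                   br q t (int (part ka r) - int (part ka y)) (int y - int r))"
  proof -
    have "(\<Prod>c\<in>Cset (addrow ka y) ka. br q t (arm ka c + 1) (leg ka c) /
            br q t (arm (addrow ka y) c + 1) (leg (addrow ka y) c))
        = (\<Prod>c\<in>Cset (addrow ka y) ka. br q t (arm ka c + 1) (leg ka c) / br q t (arm ka c + 1) (leg ka c + 1))"
      by (rule prod.cong) (simp_all add: arm_leg_addrow_Cset[OF ka ad])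
    also have "\<dots> = (\<Prod>r\<in>{1..<y}. br q t (int (part ka r) - int (part ka y)) (int y - 1 - int r) /
                     br q t (int (part ka r) - int (part ka y)) (int y - int r))"
      using prod_Cset_addrow[OF ka ad, of "\<lambda>a l. br q t (a + 1) l / br q t (a + 1) (l + 1)"]
      by (simp add: algebra_simps)
    finally show ?thesis .
  qed
  show ?thesis unfolding alpha_def rows cols ..
qed

lemma alphabar_addrow_rowwise:
  assumes ka: "is_partition ka" and ad: "addable ka y" and N: "length ka \<le> N"
  shows "alphabar q t (addrow ka y) ka =
    (\<Prod>r\<in>{y..N}. br q t (int (part ka y) - int (part ka r) + 1) (int r - int y) /
                  br q t (int (part ka y) - int (part ka (r + 1)) + 1) (int r - int y)) *
    (\<Prod>r\<in>{1..<y}. br q t (int (part ka r) - int (part ka y) - 1) (int y - int r) /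
                   br q t (int (part ka r) - int (part ka y) - 1) (int y - int r + 1))"
proof -
  have rows: "(\<Prod>c\<in>Rset (addrow ka y) ka. br q t (arm ka c + 1) (leg ka c) /
          br q t (arm (addrow ka y) c + 1) (leg (addrow ka y) c))
      = (\<Prod>r\<in>{y..N}. br q t (int (part ka y) - int (part ka r) + 1) (int r - int y) /
                  br q t (int (part ka y) - int (part ka (r + 1)) + 1) (int r - int y))"
  proof -
    have "(\<Prod>c\<in>Rset (addrow ka y) ka. br q t (arm ka c + 1) (leg ka c) /
            br q t (arm (addrow ka y) c + 1) (leg (addrow ka y) c))
        = (\<Prod>c\<in>Rset (addrow ka y) ka. br q t (arm ka c + 1) (leg ka c) / br q t (arm ka c + 1 + 1) (leg ka c))"
      by (rule prod.cong) (simp_all add: arm_leg_addrow_Rset[OF ka ad])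
    also have "\<dots> = (\<Prod>r\<in>{y..N}. br q t (int (part ka y) - int (part ka r) + 1) (int r - int y) /
                    br q t (int (part ka y) - int (part ka (r + 1)) + 1) (int r - int y))"
      by (rule prod_Rset_addrow_telescope[OF ka ad _ N, where \<phi> = "\<lambda>a l. br q t (a + 1) l"])
        (simp add: br_nonzero)
    finally show ?thesis .
  qed
  have cols: "(\<Prod>c\<in>Cset (addrow ka y) ka. br q t (arm ka c) (leg ka c + 1) /
          br q t (arm (addrow ka y) c) (leg (addrow ka y) c + 1))
      = (\<Prod>r\<in>{1..<y}. br q t (int (part ka r) - int (part ka y) - 1) (int y - int r) /
                   br q t (int (part ka r) - int (part ka y) - 1) (int y - int r + 1))"
  proof -
    have "(\<Prod>c\<in>Cset (addrow ka y) ka. br q t (arm ka c) (leg ka c + 1) /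
            br q t (arm (addrow ka y) c) (leg (addrow ka y) c + 1))
        = (\<Prod>c\<in>Cset (addrow ka y) ka. br q t (arm ka c) (leg ka c + 1) / br q t (arm ka c) (leg ka c + 1 + 1))"
      by (rule prod.cong) (simp_all add: arm_leg_addrow_Cset[OF ka ad])
    also have "\<dots> = (\<Prod>r\<in>{1..<y}. br q t (int (part ka r) - int (part ka y) - 1) (int y - int r) /
                     br q t (int (part ka r) - int (part ka y) - 1) (int y - int r + 1))"
      using prod_Cset_addrow[OF ka ad, of "\<lambda>a l. br q t a (l + 1) / br q t a (l + 2)"]
      by (simp add: algebra_simps)
    finally show ?thesis .
  qed
  show ?thesis unfolding alphabar_def rows cols ..
qed

lemma alpha_addrow_eq:
  assumes ka: "is_partition ka" and ad: "addable ka y" and N: "length ka \<le> N"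
  shows "alpha q t (addrow ka y) ka =
    (rowvar ka (N + 1) / rowvar ka y) * (\<Prod>r\<in>{1..N}. (rowvar ka r - t * rowvar ka y)) /
      (t ^ (y - 1) * (\<Prod>r\<in>{1..N+1}-{y}. (rowvar ka r - rowvar ka y)))"
proof -
  define U where "U = rowvar ka"
  define P where "P r = int (part ka r)" for r
  have y: "1 \<le> y" "y \<le> N + 1" using ad N by (auto simp: addable_def)
  have U: "U r = mon (P r) (- int r)" for r by (simp add: U_def rowvar_def P_def)
  have tU: "t * U r = mon (P r) (1 - int r)" for r by (simp add: U t_mult_mon)
  have row_num: "br q t (P y - P r) (int r - int y + 1) = (U r - t * U y) / U r" for r
    unfolding tU U t_mult_mon q_mult_mon mon_diff_divide br_eq_mon by (simp add: algebra_simps)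
  have row_den: "br q t (P y - P (r + 1)) (int r - int y + 1) = (t * (U (r + 1) - U y)) / (t * U (r + 1))"
    for r
  proof -
    have "br q t (P y - P (r + 1)) (int r - int y + 1) = (U (r + 1) - U y) / U (r + 1)"
      unfolding U mon_diff_divide br_eq_mon by (simp add: algebra_simps)
    then show ?thesis using t_nonzero by simp
  qed
  have col: "br q t (P r - P y) (int y - 1 - int r) / br q t (P r - P y) (int y - int r)
      = (U r - t * U y) / (t * (U r - U y))" if "r \<in> {1..<y}" for r
  proof -
    have num: "br q t (P r - P y) (int y - 1 - int r) = (t * U y - U r) / (t * U y)"
      unfolding tU U t_mult_mon mon_diff_divide br_eq_mon by (simp add: algebra_simps)
    have den: "br q t (P r - P y) (int y - int r) = (U y - U r) / U y"
      unfolding U mon_diff_divide br_eq_mon by (simp add: algebra_simps)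
    have "U r \<noteq> U y" using that rowvar_eq_iff unfolding U_def by auto
    then show ?thesis unfolding num den using rowvar_nonzero t_nonzero unfolding U_def
      by (simp add: field_simps)
  qed
  have "alpha q t (addrow ka y) ka =
      (\<Prod>r\<in>{y..N}. ((U r - t * U y) / U r) / ((t * (U (r + 1) - U y)) / (t * U (r + 1)))) *
      (\<Prod>r\<in>{1..<y}. (U r - t * U y) / (t * (U r - U y)))"
    unfolding alpha_addrow_rowwise[OF ka ad N] P_def[symmetric] row_num row_den by (simp add: col)
  also have "\<dots> = t ^ (N + 1 - y) * (U (N + 1) / U y) * (\<Prod>r\<in>{1..N}. (U r - t * U y)) /
      (\<Prod>r\<in>{1..N+1}-{y}. t * (U r - U y))"
    by (rule prod_shift_telescope) (use y t_nonzero in \<open>auto simp: U_def rowvar_nonzero rowvar_eq_iff\<close>)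
  also have "(\<Prod>r\<in>{1..N+1}-{y}. t * (U r - U y)) = t ^ N * (\<Prod>r\<in>{1..N+1}-{y}. (U r - U y))"
    using y by (simp add: prod.distrib)
  also have "t ^ N = t ^ (N + 1 - y) * t ^ (y - 1)" using y by (simp flip: power_add)
  finally show ?thesis using t_nonzero by (simp add: U_def)
qed

lemma alphabar_addrow_eq:
  assumes ka: "is_partition ka" and ad: "addable ka y" and N: "length ka \<le> N"
  shows "alphabar q t (addrow ka y) ka =
    t ^ (N + 1 - y) * (rowvar ka (N + 1) / rowvar ka y) * (\<Prod>r\<in>{1..N}. (rowvar ka r - q * rowvar ka y)) /
      (\<Prod>r\<in>{1..N+1}-{y}. (t * rowvar ka r - q * rowvar ka y))"
proof -
  define U where "U = rowvar ka"
  define P where "P r = int (part ka r)" for r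
  have y: "1 \<le> y" "y \<le> N + 1" using ad N by (auto simp: addable_def)
  have U: "U r = mon (P r) (- int r)" for r by (simp add: U_def rowvar_def P_def)
  have tU: "t * U r = mon (P r) (1 - int r)" for r by (simp add: U t_mult_mon)
  have qU: "q * U r = mon (P r + 1) (- int r)" for r by (simp add: U q_mult_mon)
  have nz: "t * U r - q * U y \<noteq> 0" for r
    using t_rowvar_neq_q_rowvar[OF ka y(1)] unfolding U_def by simp
  have row_num: "br q t (P y - P r + 1) (int r - int y) = (U r - q * U y) / U r" for r
    unfolding qU U t_mult_mon q_mult_mon mon_diff_divide br_eq_mon by (simp add: algebra_simps)
  have row_den: "br q t (P y - P (r + 1) + 1) (int r - int y) = (t * U (r + 1) - q * U y) / (t * U (r + 1))"
    for r unfolding qU tU t_mult_mon q_mult_mon mon_diff_divide br_eq_mon by (simp add: algebra_simps)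
  have col: "br q t (P r - P y - 1) (int y - int r) / br q t (P r - P y - 1) (int y - int r + 1)
      = (U r - q * U y) / (t * U r - q * U y)" for r
  proof -
    have num: "br q t (P r - P y - 1) (int y - int r) = (q * U y - U r) / (q * U y)"
      unfolding qU U q_mult_mon mon_diff_divide br_eq_mon by (simp add: algebra_simps)
    have den: "br q t (P r - P y - 1) (int y - int r + 1) = (q * U y - t * U r) / (q * U y)"
      unfolding qU tU t_mult_mon q_mult_mon mon_diff_divide br_eq_mon by (simp add: algebra_simps)
    have "q * U y - t * U r \<noteq> 0" using nz[of r] by simp
    then show ?thesis unfolding num den using rowvar_nonzero q_nonzero nz[of r] unfolding U_def
      by (simp add: field_simps)
  qed
  have "alphabar q t (addrow ka y) ka =
      (\<Prod>r\<in>{y..N}. ((U r - q * U y) / U r) / ((t * U (r + 1) - q * U y) / (t * U (r + 1)))) *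
      (\<Prod>r\<in>{1..<y}. (U r - q * U y) / (t * U r - q * U y))"
    unfolding alphabar_addrow_rowwise[OF ka ad N] P_def[symmetric] row_num row_den col ..
  also have "\<dots> = t ^ (N + 1 - y) * (U (N + 1) / U y) * (\<Prod>r\<in>{1..N}. (U r - q * U y)) /
      (\<Prod>r\<in>{1..N+1}-{y}. (t * U r - q * U y))"
    by (rule prod_shift_telescope) (use y t_nonzero nz in \<open>auto simp: U_def rowvar_nonzero\<close>)
  finally show ?thesis by (simp add: U_def)
qed

section \<open>The two summation identities\<close>

lemma gam_delrow_addrow:
  assumes "is_partition la" "removable la z" "addable la y"
  shows "gam q t la (delrow la z) (addrow la y) =
    (1 - rowvar la z / (q * rowvar la y)) * (1 - rowvar la z / (t * rowvar la y)) / ((1 - q) * (1 - t))"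
proof -
  have "q powi Aexp la (delrow la z) (addrow la y) * t powi Bexp la (delrow la z) (addrow la y)
      = rowvar la z / (q * rowvar la y)"
    and "q powi (Aexp la (delrow la z) (addrow la y) + 1) * t powi (Bexp la (delrow la z) (addrow la y) - 1)
      = rowvar la z / (t * rowvar la y)"
    unfolding Aexp_delrow_addrow[OF assms] Bexp_delrow_addrow[OF assms] rowvar_def
      q_mult_mon t_mult_mon mon_divide by (simp_all add: mon_def algebra_simps)
  then show ?thesis unfolding gam_def Let_def by simp
qed

context
  fixes la :: "nat list" and z N :: nat and U :: "nat \<Rightarrow> real" and w :: real
  assumes la: "is_partition la" and rz: "removable la z"
  defines N_def: "N \<equiv> length la" and U_def: "U \<equiv> rowvar la" and w_def: "w \<equiv> rowvar la z / q"
begin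

private lemma z_bounds: "1 \<le> z" "z \<le> N"
  using rz by (auto simp: removable_def N_def)

private lemma rowvar_delrow': "rowvar (delrow la z) r = (if r = z then w else U r)"
  using rowvar_delrow[OF la rz] by (simp add: U_def w_def)

private lemma rowvar_z: "U z = q * w"
  using q_nonzero by (simp add: U_def w_def)

lemma alpha_delrow_eq:
  "alpha q t la (delrow la z) =
    U (N + 1) * (1 - t) * (\<Prod>r\<in>{1..N}-{z}. (U r - t * w)) /
      (t ^ (z - 1) * (\<Prod>r\<in>{1..N+1}-{z}. (U r - w)))"
proof -
  define mu where "mu = delrow la z"
  have mu: "is_partition mu" "addable mu z" "length mu \<le> N" "addrow mu z = la"
    using is_partition_delrow[OF la rz] addable_delrow[OF la rz] length_delrow_le[of la z]
      addrow_delrow[OF la rz] by (simp_all add: mu_def N_def)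
  have "alpha q t la mu = (rowvar mu (N + 1) / rowvar mu z) * (\<Prod>r\<in>{1..N}. (rowvar mu r - t * rowvar mu z)) /
      (t ^ (z - 1) * (\<Prod>r\<in>{1..N+1}-{z}. (rowvar mu r - rowvar mu z)))"
    using alpha_addrow_eq[OF mu(1,2,3)] mu(4) by simp
  also have "(\<Prod>r\<in>{1..N}. (rowvar mu r - t * rowvar mu z)) = (w - t * w) * (\<Prod>r\<in>{1..N}-{z}. (U r - t * w))"
  proof -
    have "(\<Prod>r\<in>{1..N}-{z}. (rowvar mu r - t * rowvar mu z)) = (\<Prod>r\<in>{1..N}-{z}. (U r - t * w))"
      by (rule prod.cong) (auto simp: mu_def rowvar_delrow')
    then show ?thesis
      using z_bounds by (subst prod.remove[of _ z]) (auto simp: mu_def rowvar_delrow')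
  qed
  also have "(\<Prod>r\<in>{1..N+1}-{z}. (rowvar mu r - rowvar mu z)) = (\<Prod>r\<in>{1..N+1}-{z}. (U r - w))"
    by (rule prod.cong) (auto simp: mu_def rowvar_delrow')
  also have "rowvar mu (N + 1) / rowvar mu z * ((w - t * w) * (\<Prod>r\<in>{1..N}-{z}. (U r - t * w)))
      = U (N + 1) * (1 - t) * (\<Prod>r\<in>{1..N}-{z}. (U r - t * w))"
    using z_bounds rowvar_nonzero q_nonzero by (simp add: mu_def rowvar_delrow' w_def field_simps)
  finally show ?thesis by (simp add: mu_def)
qed

private lemma rowvar_neq_w: "U r \<noteq> w"
  using rowvar_neq_q_rowvar[of la z r] q_nonzero by (auto simp: U_def w_def field_simps)

private lemma prod_rowvar_minus_t_w_nonzero: "(\<Prod>r\<in>{1..N}-{z}. (U r - t * w)) \<noteq> 0"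
proof -
  have "U r \<noteq> t * w" if "1 \<le> r" for r
    using t_rowvar_neq_q_rowvar[OF la that, of z] q_nonzero by (auto simp: U_def w_def field_simps)
  then show ?thesis by (subst prod_zero_iff) auto
qed

private lemma prod_rowvar_minus_w_nonzero: "(\<Prod>r\<in>{1..N+1}-{z}. (U r - w)) \<noteq> 0"
  using rowvar_neq_w by (subst prod_zero_iff) auto

private lemma t_rowvar_neq_rowvar_z: "t * U r \<noteq> U z"
  using rz unfolding U_def t_rowvar_eq_rowvar_iff by (auto simp: removable_def)

private lemma t_powi_Bexp:
  assumes "addable la y"
  shows "t powi (Bexp la (delrow la z) (addrow la y) - 1) = t ^ (y - 1) / (t * t ^ (z - 1))"
proof -
  have "1 \<le> y" using assms by (simp add: addable_def)
  then have "Bexp la (delrow la z) (addrow la y) - 1 = int (y - 1) - int z"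
    using Bexp_delrow_addrow[OF la rz assms] by simp
  then show ?thesis using t_nonzero z_bounds by (simp add: power_int_diff flip: power_Suc)
qed

lemma Pdown_delrow_addrow_eq:
  assumes ad: "addable la y"
  shows "Pdown q t la (delrow la z) (addrow la y) =
    (1 - q) * (\<Prod>r\<in>{1..N+1}-{z}. (U r - w)) / (\<Prod>r\<in>{1..N}-{z}. (U r - t * w)) *
    (U y * (\<Prod>r\<in>{1..N}-{z}. (U r - t * U y))) / ((w - U y) * (\<Prod>r\<in>{1..N+1}-{y}. (U r - U y)))"
proof -
  define N0 where "N0 x = (\<Prod>r\<in>{1..N}-{z}. (U r - t * x))" for x
  define Pw where "Pw = (\<Prod>r\<in>{1..N+1}-{z}. (U r - w))"
  define D where "D = (\<Prod>r\<in>{1..N+1}-{y}. (U r - U y))"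
  have y: "1 \<le> y" "y \<le> N + 1" using ad by (auto simp: addable_def N_def)
  have "(\<Prod>r\<in>{1..N}. (U r - t * U y)) = (U z - t * U y) * N0 (U y)"
    unfolding N0_def using z_bounds by (subst prod.remove[of _ z]) auto
  then have alpha_nu: "alpha q t (addrow la y) la = (U (N + 1) / U y) * ((U z - t * U y) * N0 (U y)) / (t ^ (y - 1) * D)"
    using alpha_addrow_eq[OF la ad, of N] by (simp add: N_def U_def D_def)
  have alpha_mu: "alpha q t la (delrow la z) = U (N + 1) * (1 - t) * N0 w / (t ^ (z - 1) * Pw)"
    unfolding alpha_delrow_eq N0_def Pw_def ..
  have gam: "gam q t la (delrow la z) (addrow la y) = (1 - w / U y) * (1 - U z / (t * U y)) / ((1 - q) * (1 - t))"
    unfolding gam_delrow_addrow[OF la rz ad] by (simp add: U_def w_def)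
  have nz: "U y \<noteq> 0" "U (N + 1) \<noteq> 0" "D \<noteq> 0" "N0 w \<noteq> 0" "Pw \<noteq> 0"
    using rowvar_nonzero rowvar_eq_iff prod_rowvar_minus_t_w_nonzero prod_rowvar_minus_w_nonzero
    by (auto simp: U_def D_def N0_def Pw_def prod_zero_iff)
  have nz_diff: "t * U y - U z \<noteq> 0" "U y - w \<noteq> 0" "1 - q \<noteq> 0" "1 - t \<noteq> 0"
    using t_rowvar_neq_rowvar_z[of y] rowvar_neq_w[of y] q_neq_1 t_neq_1 by auto
  have prefactor: "t powi (Bexp la (delrow la z) (addrow la y) - 1) *
      (alpha q t (addrow la y) la * beta q t la (delrow la z))
      = - (N0 (U y) * Pw / (U y * D * (1 - t) * N0 w)) * ((t * U y - U z) / t)"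
    unfolding t_powi_Bexp[OF ad] alpha_nu alpha_mu beta_def using nz nz_diff t_nonzero by (simp add: field_simps)
  have gam': "gam q t la (delrow la z) (addrow la y)
      = ((t * U y - U z) / t) * ((U y - w) / (U y ^ 2 * ((1 - q) * (1 - t))))"
    unfolding gam using nz t_nonzero by (simp add: field_simps power2_eq_square)
  have "Pdown q t la (delrow la z) (addrow la y)
      = - (N0 (U y) * Pw / (U y * D * (1 - t) * N0 w)) / ((U y - w) / (U y ^ 2 * ((1 - q) * (1 - t))))"
    unfolding Pdown_def prefactor gam' using nz_diff t_nonzero by simp
  also have "\<dots> = (1 - q) * Pw / N0 w * (U y * N0 (U y)) / ((w - U y) * D)"
    using nz nz_diff by (simp add: divide_simps power2_eq_square) (simp add: algebra_simps)
  finally show ?thesis unfolding N0_def Pw_def D_def .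
qed

private lemma prod_rowvar_minus_t_rowvar_eq_0:
  assumes y: "y \<in> {1..N+1}" and not_ad: "\<not> addable la y"
  shows "(\<Prod>r\<in>{1..N}-{z}. (U r - t * U y)) = 0"
proof -
  have "y \<noteq> 1" using y not_ad by (auto simp: addable_def N_def)
  moreover have "part la y \<le> part la (y - 1)" using part_mono[OF la, of "y - 1" y] \<open>y \<noteq> 1\<close> y by auto
  ultimately have same: "part la y = part la (y - 1)" using y not_ad by (auto simp: addable_def N_def)
  then have "y - 1 \<noteq> z" using rz \<open>y \<noteq> 1\<close> by (auto simp: removable_def)
  moreover have "U (y - 1) - t * U y = 0"
    using t_rowvar_eq_rowvar_iff[of la y "y - 1"] same \<open>y \<noteq> 1\<close> y unfolding U_def by auto
  moreover have "y - 1 \<in> {1..N}" using y \<open>y \<noteq> 1\<close> by auto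
  ultimately show ?thesis by (subst prod_zero_iff) auto
qed

lemma Pdown_sum_eq_1: "(\<Sum>nu\<in>Ups la. Pdown q t la (delrow la z) nu) = 1"
proof -
  define N0 where "N0 x = (\<Prod>r\<in>{1..N}-{z}. (U r - t * x))" for x
  define Pw where "Pw = (\<Prod>r\<in>{1..N+1}-{z}. (U r - w))"
  define C where "C = (1 - q) * Pw / N0 w"
  define D where "D y = (w - U y) * (\<Prod>r\<in>{1..N+1}-{y}. (U r - U y))" for y
  define p where "p = [:0, 1:] * (\<Prod>r\<in>{1..N}-{z}. [:U r, -t:])"
  have poly_p: "poly p x = x * N0 x" for x
    unfolding p_def N0_def by (simp add: poly_prod algebra_simps)
  have "degree p \<le> 1 + card ({1..N}-{z})"
    unfolding p_def by (rule order.trans[OF degree_mult_le]) (simp add: degree_prod_linear_le)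
  then have deg_p: "degree p < card {1..N+1}" using z_bounds by simp
  have "(\<Sum>nu\<in>Ups la. Pdown q t la (delrow la z) nu) = (\<Sum>y\<in>{y. addable la y}. C * (poly p (U y) / D y))"
    unfolding Ups_eq[OF la] sum.reindex[OF inj_on_addrow]
    by (rule sum.cong) (simp_all add: Pdown_delrow_addrow_eq poly_p C_def N0_def Pw_def D_def)
  also have "\<dots> = (\<Sum>y\<in>{1..N+1}. C * (poly p (U y) / D y))"
  proof (rule sum.mono_neutral_left)
    show "{y. addable la y} \<subseteq> {1..N+1}" by (auto simp: addable_def N_def)
    show "\<forall>y\<in>{1..N+1} - {y. addable la y}. C * (poly p (U y) / D y) = 0"
      using prod_rowvar_minus_t_rowvar_eq_0 by (simp add: poly_p N0_def)
  qed simp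
  also have "\<dots> = C * (\<Sum>y\<in>{1..N+1}. poly p (U y) / D y)"
    by (simp only: sum_distrib_left)
  also have "(\<Sum>y\<in>{1..N+1}. poly p (U y) / D y) = - (poly p w / (\<Prod>r\<in>{1..N+1}. (U r - w)))"
    unfolding D_def by (rule divided_difference_poly_one_extra_node)
      (use deg_p rowvar_neq_w in \<open>auto simp: inj_on_def U_def rowvar_eq_iff\<close>)
  also have "(\<Prod>r\<in>{1..N+1}. (U r - w)) = (q * w - w) * Pw"
    unfolding Pw_def using z_bounds rowvar_z by (subst prod.remove[of _ z]) auto
  also have "C * - (poly p w / ((q * w - w) * Pw)) = 1"
  proof -
    have "w \<noteq> 0" "Pw \<noteq> 0" "N0 w \<noteq> 0" "q - 1 \<noteq> 0"
      using rowvar_nonzero q_nonzero prod_rowvar_minus_t_w_nonzero prod_rowvar_minus_w_nonzero q_neq_1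
      by (simp_all add: w_def Pw_def N0_def)
    then show ?thesis unfolding C_def poly_p by (simp add: field_simps)
  qed
  finally show ?thesis .
qed

lemma alphabar_delrow_eq:
  "alphabar q t la (delrow la z) =
    t ^ (N + 1 - z) * U (N + 1) * (1 - q) * (\<Prod>r\<in>{1..N}-{z}. (U r - U z)) /
      (\<Prod>r\<in>{1..N+1}-{z}. (t * U r - U z))"
proof -
  define mu where "mu = delrow la z"
  have mu: "is_partition mu" "addable mu z" "length mu \<le> N" "addrow mu z = la"
    using is_partition_delrow[OF la rz] addable_delrow[OF la rz] length_delrow_le[of la z]
      addrow_delrow[OF la rz] by (simp_all add: mu_def N_def)
  have "alphabar q t la mu = t ^ (N + 1 - z) * (rowvar mu (N + 1) / rowvar mu z) *
      (\<Prod>r\<in>{1..N}. (rowvar mu r - q * rowvar mu z)) /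
      (\<Prod>r\<in>{1..N+1}-{z}. (t * rowvar mu r - q * rowvar mu z))"
    using alphabar_addrow_eq[OF mu(1,2,3)] mu(4) by simp
  also have "(\<Prod>r\<in>{1..N}. (rowvar mu r - q * rowvar mu z)) = (w - U z) * (\<Prod>r\<in>{1..N}-{z}. (U r - U z))"
  proof -
    have "(\<Prod>r\<in>{1..N}-{z}. (rowvar mu r - q * rowvar mu z)) = (\<Prod>r\<in>{1..N}-{z}. (U r - U z))"
      by (rule prod.cong) (auto simp: mu_def rowvar_delrow' rowvar_z)
    then show ?thesis
      using z_bounds by (subst prod.remove[of _ z]) (auto simp: mu_def rowvar_delrow' rowvar_z)
  qed
  also have "(\<Prod>r\<in>{1..N+1}-{z}. (t * rowvar mu r - q * rowvar mu z)) = (\<Prod>r\<in>{1..N+1}-{z}. (t * U r - U z))"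
    by (rule prod.cong) (auto simp: mu_def rowvar_delrow' rowvar_z)
  also have "t ^ (N + 1 - z) * (rowvar mu (N + 1) / rowvar mu z) * ((w - U z) * (\<Prod>r\<in>{1..N}-{z}. (U r - U z)))
      = t ^ (N + 1 - z) * U (N + 1) * (1 - q) * (\<Prod>r\<in>{1..N}-{z}. (U r - U z))"
    using z_bounds rowvar_nonzero q_nonzero by (simp add: mu_def rowvar_delrow' rowvar_z w_def field_simps)
  finally show ?thesis by (simp add: mu_def)
qed

private lemma prod_t_rowvar_minus_rowvar_z_eq:
  assumes "y \<in> {1..N+1}"
  shows "(\<Prod>r\<in>{1..N+1}-{z}. (t * U r - U z)) =
    (t * U y - U z) * (\<Prod>r\<in>{1..N+1}-{y}. (t * U r - U z)) / ((t - 1) * U z)"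
proof -
  have "(t * U z - U z) * (\<Prod>r\<in>{1..N+1}-{z}. (t * U r - U z)) = (\<Prod>r\<in>{1..N+1}. (t * U r - U z))"
    using z_bounds by (subst (2) prod.remove[of _ z]) auto
  also have "\<dots> = (t * U y - U z) * (\<Prod>r\<in>{1..N+1}-{y}. (t * U r - U z))"
    using assms by (subst prod.remove[of _ y]) auto
  finally show ?thesis
    using rowvar_nonzero t_neq_1 by (simp add: U_def field_simps)
qed

lemma Pbar_delrow_addrow_eq:
  assumes ad: "addable la y"
  shows "Pbar q t la (delrow la z) (addrow la y) =
    q * U y * (\<Prod>r\<in>{1..N}. (U r - q * U y)) / (\<Prod>r\<in>{1..N+1}-{y}. (t * U r - q * U y)) *
    (\<Prod>r\<in>{1..N+1}-{y}. (t * U r - U z)) / (- U z * (q * U y - U z) * (\<Prod>r\<in>{1..N}-{z}. (U r - U z)))"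
proof -
  define PA where "PA = (\<Prod>r\<in>{1..N}. (U r - q * U y))"
  define PB where "PB = (\<Prod>r\<in>{1..N+1}-{y}. (t * U r - q * U y))"
  define E where "E = (\<Prod>r\<in>{1..N+1}-{y}. (t * U r - U z))"
  define P' where "P' = (\<Prod>r\<in>{1..N}-{z}. (U r - U z))"
  define Q where "Q = (\<Prod>r\<in>{1..N+1}-{z}. (t * U r - U z))"
  have y: "1 \<le> y" "y \<le> N + 1" using ad by (auto simp: addable_def N_def)
  have nz: "U y \<noteq> 0" "U z \<noteq> 0" "U (N + 1) \<noteq> 0" "PA \<noteq> 0" "PB \<noteq> 0" "P' \<noteq> 0" "Q \<noteq> 0"
    using rowvar_nonzero rowvar_eq_iff rowvar_neq_q_rowvar t_rowvar_neq_q_rowvar[OF la y(1)]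
      t_rowvar_neq_rowvar_z
    by (auto simp: U_def PA_def PB_def P'_def Q_def prod_zero_iff)
  have nz_diff: "t * U y - U z \<noteq> 0" "q * U y - U z \<noteq> 0" "1 - q \<noteq> 0" "1 - t \<noteq> 0"
    using t_rowvar_neq_rowvar_z[of y] rowvar_neq_q_rowvar[of la z y] q_neq_1 t_neq_1
    by (auto simp: U_def)
  have Q: "Q = (t * U y - U z) * E / ((t - 1) * U z)"
    unfolding Q_def E_def using prod_t_rowvar_minus_rowvar_z_eq y by simp
  have powers: "t ^ (N + 1 - y) = t ^ N / t ^ (y - 1)" "t ^ (N + 1 - z) = t ^ N / t ^ (z - 1)"
    using y z_bounds t_nonzero by (simp_all add: field_simps flip: power_add)
  have "alphabar q t (addrow la y) la = t ^ (N + 1 - y) * (U (N + 1) / U y) * PA / PB"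
    using alphabar_addrow_eq[OF la ad, of N] by (simp add: N_def U_def PA_def PB_def)
  then have alphabar_nu: "alphabar q t (addrow la y) la = t ^ N / t ^ (y - 1) * (U (N + 1) / U y) * PA / PB"
    unfolding powers .
  have "t powi (Bexp la (delrow la z) (addrow la y) - 1) *
      (alphabar q t (addrow la y) la * betabar q t la (delrow la z))
      = PA * Q / (t * U y * PB * (1 - q) * P')"
    unfolding t_powi_Bexp[OF ad] betabar_def alphabar_delrow_eq alphabar_nu powers
      P'_def[symmetric] Q_def[symmetric]
    using nz nz_diff t_nonzero by (simp add: field_simps)
  also have "\<dots> = PA * E / (U y * PB * (1 - q) * P' * ((t - 1) * U z)) * ((t * U y - U z) / t)"
    unfolding Q using nz nz_diff t_nonzero t_neq_1 by (simp add: field_simps)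
  finally have prefactor: "t powi (Bexp la (delrow la z) (addrow la y) - 1) *
      (alphabar q t (addrow la y) la * betabar q t la (delrow la z))
      = PA * E / (U y * PB * (1 - q) * P' * ((t - 1) * U z)) * ((t * U y - U z) / t)" .
  have gam: "gam q t la (delrow la z) (addrow la y)
      = ((t * U y - U z) / t) * ((q * U y - U z) / (q * U y ^ 2 * ((1 - q) * (1 - t))))"
    unfolding gam_delrow_addrow[OF la rz ad] U_def[symmetric]
    using nz t_nonzero q_nonzero by (simp add: field_simps power2_eq_square)
  have "Pbar q t la (delrow la z) (addrow la y)
      = PA * E / (U y * PB * (1 - q) * P' * ((t - 1) * U z)) / ((q * U y - U z) / (q * U y ^ 2 * ((1 - q) * (1 - t))))"
    unfolding Pbar_def prefactor gam using delrow_neq[OF la rz] nz_diff t_nonzero by simp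
  also have "\<dots> = q * U y * PA / PB * E / (- U z * (q * U y - U z) * P')"
    using nz nz_diff t_nonzero q_nonzero by (simp add: divide_simps power2_eq_square) (simp add: algebra_simps)
  finally show ?thesis unfolding PA_def PB_def E_def P'_def .
qed

end

context
  fixes la :: "nat list" and y N :: nat and U :: "nat \<Rightarrow> real"
  assumes la: "is_partition la" and ad: "addable la y"
  defines N_def: "N \<equiv> length la" and U_def: "U \<equiv> rowvar la"
begin

private lemma y_bounds: "1 \<le> y" "y \<le> N + 1"
  using ad by (auto simp: addable_def N_def)

lemma Pbar_self_addrow_eq:
  "Pbar q t la la (addrow la y) =
    t ^ N * (U (N + 1) / U y) * (\<Prod>r\<in>{1..N}. (U r - q * U y)) /
      (\<Prod>r\<in>{1..N+1}-{y}. (t * U r - q * U y))"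
proof -
  have "nfun (addrow la y) - nfun la = int (y - 1)" using nfun_addrow[OF la ad] y_bounds by simp
  moreover have "t ^ (y - 1) * t ^ (N + 1 - y) = t ^ N" using y_bounds by (simp flip: power_add)
  ultimately show ?thesis
    unfolding Pbar_def using alphabar_addrow_eq[OF la ad, of N] by (simp add: N_def U_def mult.assoc)
qed

private lemma prod_t_rowvar_minus_rowvar_eq_0:
  assumes z: "z \<in> {1..N}" and not_rem: "\<not> removable la z"
  shows "(\<Prod>r\<in>{1..N+1}-{y}. (t * U r - U z)) = 0"
proof -
  have same: "part la (z + 1) = part la z"
    using part_mono[OF la, of z "z + 1"] z not_rem by (auto simp: removable_def N_def)
  then have "z + 1 \<noteq> y" using ad z by (auto simp: addable_def)
  moreover have "t * U (z + 1) - U z = 0" using same unfolding U_def by (simp add: t_rowvar_eq_rowvar_iff)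
  moreover have "z + 1 \<in> {1..N+1}" using z by simp
  ultimately show ?thesis by (subst prod_zero_iff) auto
qed

lemma Pbar_sum_eq_1: "(\<Sum>mu\<in>Downs_star la. Pbar q t la mu (addrow la y)) = 1"
proof -
  define PA where "PA = (\<Prod>r\<in>{1..N}. (U r - q * U y))"
  define PB where "PB = (\<Prod>r\<in>{1..N+1}-{y}. (t * U r - q * U y))"
  define L where "L = (\<Prod>r\<in>{1..N}. U r)"
  define C where "C = q * U y * PA / PB"
  define D where "D z = - U z * (q * U y - U z) * (\<Prod>r\<in>{1..N}-{z}. (U r - U z))" for z
  define p where "p = (\<Prod>r\<in>{1..N+1}-{y}. [:t * U r, -1:])"
  have poly_p: "poly p x = (\<Prod>r\<in>{1..N+1}-{y}. (t * U r - x))" for x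
    unfolding p_def by (simp add: poly_prod)
  have deg_p: "degree p \<le> card {1..N}"
    unfolding p_def using degree_prod_linear_le[of "\<lambda>r. t * U r" "-1" "{1..N+1}-{y}"] y_bounds by simp
  have nz: "U y \<noteq> 0" "U (N + 1) \<noteq> 0" "q * U y \<noteq> 0" "PA \<noteq> 0" "PB \<noteq> 0" "L \<noteq> 0"
    using rowvar_nonzero rowvar_neq_q_rowvar t_rowvar_neq_q_rowvar[OF la y_bounds(1)] q_nonzero
    by (auto simp: U_def PA_def PB_def L_def prod_zero_iff)
  have "poly p 0 = t ^ N * (\<Prod>r\<in>{1..N+1}-{y}. U r)"
    using y_bounds by (simp add: poly_prod p_def prod.distrib)
  also have "(\<Prod>r\<in>{1..N+1}-{y}. U r) = (\<Prod>r\<in>{1..N+1}. U r) / U y"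
    using y_bounds nz by (subst (2) prod.remove[of _ y]) auto
  also have "(\<Prod>r\<in>{1..N+1}. U r) = L * U (N + 1)"
    unfolding L_def by (simp add: atLeastAtMostSuc_conv mult.commute)
  finally have p0: "poly p 0 = t ^ N * (L * U (N + 1) / U y)" .
  have "(\<Sum>mu\<in>Downs la. Pbar q t la mu (addrow la y)) = (\<Sum>z\<in>{z. removable la z}. C * (poly p (U z) / D z))"
    unfolding Downs_eq[OF la] sum.reindex[OF inj_on_delrow[OF la]]
    by (rule sum.cong) (simp_all add: Pbar_delrow_addrow_eq[OF la _ ad] C_def D_def poly_p PA_def PB_def N_def U_def)
  also have "\<dots> = (\<Sum>z\<in>{1..N}. C * (poly p (U z) / D z))"
  proof (rule sum.mono_neutral_left)
    show "{z. removable la z} \<subseteq> {1..N}" by (auto simp: removable_def N_def)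
    show "\<forall>z\<in>{1..N} - {z. removable la z}. C * (poly p (U z) / D z) = 0"
      using prod_t_rowvar_minus_rowvar_eq_0 by (simp add: poly_p)
  qed simp
  also have "\<dots> = C * (\<Sum>z\<in>{1..N}. poly p (U z) / D z)"
    by (simp only: sum_distrib_left)
  also have "(\<Sum>z\<in>{1..N}. poly p (U z) / D z) = PB / (q * U y * PA) - poly p 0 / (q * U y * L)"
  proof -
    have "(\<Sum>z\<in>{1..N}. poly p (U z) / D z) = poly p (q * U y) / (q * U y * (\<Prod>j\<in>{1..N}. (U j - q * U y)))
        - poly p 0 / (q * U y * (\<Prod>j\<in>{1..N}. U j))"
      unfolding D_def by (rule divided_difference_poly_two_extra_nodes)
        (use deg_p nz rowvar_neq_q_rowvar[THEN not_sym] rowvar_nonzero in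
          \<open>auto simp: inj_on_def U_def rowvar_eq_iff\<close>)
    moreover have "poly p (q * U y) = PB" by (simp add: poly_p PB_def)
    ultimately show ?thesis unfolding PA_def[symmetric] L_def[symmetric] by simp
  qed
  finally have downs: "(\<Sum>mu\<in>Downs la. Pbar q t la mu (addrow la y)) = 1 - t ^ N * (U (N + 1) / U y) * PA / PB"
    unfolding C_def p0 using nz by (simp add: field_simps)
  show ?thesis
    unfolding sum_Downs_star[OF la] downs Pbar_self_addrow_eq PA_def PB_def by simp
qed

end

end

theorem theorem4p14:
  fixes la :: "nat list" and q t :: real
  assumes "is_partition la"
    and "q \<noteq> 0" and "t \<noteq> 0"
    and generic: "\<And>i j :: int. (i, j) \<noteq> (0, 0) \<Longrightarrow> q powi i * t powi j \<noteq> 1"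
  shows "(\<forall>mu \<in> Downs la. (\<Sum>nu \<in> Ups la. Pdown q t la mu nu) = 1)
     \<and> (\<forall>nu \<in> Ups la. (\<Sum>mu \<in> Downs_star la. Pbar q t la mu nu) = 1)"
proof -
  interpret qt_generic q t
    using assms(2,3) generic by unfold_locales
  show ?thesis
    using Pdown_sum_eq_1[OF assms(1)] Pbar_sum_eq_1[OF assms(1)]
    unfolding Downs_eq[OF assms(1)] Ups_eq[OF assms(1)] by auto
qed

end
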